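(* Under the setup in the context, assume in addition that $H_j$ is nonsingular and that the block GMRES residual $F_{j-1}^{(G)}$ has rank $L$ (so $\tilde C_j$ is nonsingular). Let $Q_j^{(11)}=\mathcal U_1\mathcal C\mathcal V_1^*$ and $Q_j^{(21)}=\mathcal U_2\mathcal S\mathcal V_1^*$ be a CS decomposition of the first block column of $\Omega_j$, with $\mathcal U_1,\mathcal U_2,\mathcal V_1\in\mathbb C^{L\times L}$ unitary and $\mathcal C=\mathrm{diag}(c_1,\dots,c_L)$, $\mathcal S=\mathrm{diag}(s_1,\dots,s_L)$ real, nonnegative, with $c_i^2+s_i^2=1$. Then $$X_j^{(G)}=X_j^{(F)}\bigl(\tilde C_j^{-1}\mathcal V_1\mathcal C^2\mathcal V_1^*\tilde C_j\bigr)+X_{j-1}^{(G)}\bigl(\tilde C_j^{-1}\mathcal V_1\mathcal S^2\mathcal V_1^*\tilde C_j\bigr),$$ where the two bracketed matrices sum to $I_L$ and $\tilde C_j^{-1}\mathcal V_1\mathcal C^2\mathcal V_1^*\tilde C_j=\tilde C_j^{-1}(Q_j^{(11)})^*Q_j^{(11)}\tilde C_j$.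
   Context: Let $n,L\ge1$, $A\in\mathbb C^{n\times n}$, $B,X_0\in\mathbb C^{n\times L}$, $F_0=B-AX_0$, and let $F_0=V_1S_0$ be a reduced QR factorization ($V_1\in\mathbb C^{n\times L}$ with orthonormal columns, $S_0\in\mathbb C^{L\times L}$ upper triangular). Fix $j\ge2$. The block Arnoldi process (possibly with dependent basis vectors replaced by new orthonormal vectors) yields $W_k=[V_1,\dots,V_k]\in\mathbb C^{n\times kL}$ ($k\le j+1$) with orthonormal columns, $V_i\in\mathbb C^{n\times L}$, and the block Arnoldi relation $AW_j=W_{j+1}\bar H_j$, where $\bar H_j=(H_{ik})\in\mathbb C^{(j+1)L\times jL}$ has $L\times L$ blocks $H_{ik}$, is block upper Hessenberg ($H_{ik}=0$ for $i>k+1$), and each $H_{k+1,k}$ is upper triangular. For $k\le j$, $\bar H_k$ denotes the leading $(k+1)L\times kL$ submatrix of $\bar H_j$ and $H_k$ the leading $kL\times kL$ submatrix. $E^{[m]}\in\mathbb R^{mL\times L}$ denotes the first $L$ columns of $I_{mL}$. For $k\ge1$ with $\bar H_k$ of full column rank, the block GMRES iterate is $X_k^{(G)}=X_0+W_kY_k^{(G)}$, where $Y_k^{(G)}\in\mathbb C^{kL\times L}$ is the unique minimizer of $\|\bar H_kY-E^{[k+1]}S_0\|_F$ (Frobenius norm), and $F_k^{(G)}=B-AX_k^{(G)}$. If $H_k$ is nonsingular, the block FOM iterate is $X_k^{(F)}=X_0+W_kH_k^{-1}E^{[k]}S_0$. Block QR factorization: assume $\bar H_j$ has full column rank. There are unitary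 matrices $\Omega_i=\begin{bmatrix}Q_i^{(11)}&Q_i^{(12)}\\Q_i^{(21)}&Q_i^{(22)}\end{bmatrix}\in\mathbb C^{2L\times 2L}$ ($i=1,\dots,j$, all four blocks $L\times L$); for $m\ge i+1$ put $Q_i^{(m)}=\mathrm{diag}(I_{(i-1)L},\Omega_i,I_{(m-i-1)L})\in\mathbb C^{mL\times mL}$ and $\bar Q_k=Q_k^{(k+1)}Q_{k-1}^{(k+1)}\cdots Q_1^{(k+1)}$. The $\Omega_i$ are chosen recursively so that $\bar Q_k\bar H_k=\begin{bmatrix}R_k\\ 0_{L\times kL}\end{bmatrix}$ with $R_k\in\mathbb C^{kL\times kL}$ upper triangular and nonsingular ($k=1,\dots,j$). In particular $Q_{j-1}^{(j+1)}\cdots Q_1^{(j+1)}\bar H_j=\begin{bmatrix}R_{j-1}&Z_j\\0&\hat H_{jj}\\0&H_{j+1,j}\end{bmatrix}$ for some $Z_j\in\mathbb C^{(j-1)L\times L}$, $\hat H_{jj}\in\mathbb C^{L\times L}$; and $\Omega_j\begin{bmatrix}\hat H_{jj}\\H_{j+1,j}\end{bmatrix}=\begin{bmatrix}N_j\\0\end{bmatrix}$ with $N_j$ upper triangular and nonsingular. Write $\bar Q_{j-1}E^{[j]}S_0=\begin{bmatrix}G_{j-1}\\\tilde C_j\end{bmatrix}$ with $G_{j-1}\in\mathbb C^{(j-1)L\times L}$, $\tilde C_j\in\mathbb C^{L\times L}$. *)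

theory Defs
  imports Complex_Main "Jordan_Normal_Form.Schur_Decomposition" "Jordan_Normal_Form.DL_Rank"
begin

(* All indices of blocks below are 1-based as in the paper; entries are 0-based. *)

definition blk :: "'a mat \<Rightarrow> nat \<Rightarrow> nat \<Rightarrow> nat \<Rightarrow> 'a mat" where
  "blk X i k L = mat L L (\<lambda>(a,b). X $$ ((i-1)*L + a, (k-1)*L + b))"

definition lead :: "nat \<Rightarrow> nat \<Rightarrow> 'a mat \<Rightarrow> 'a mat" where
  "lead r c X = mat r c (\<lambda>(a,b). X $$ (a,b))"

definition row_range :: "nat \<Rightarrow> nat \<Rightarrow> 'a mat \<Rightarrow> 'a mat" where
  "row_range r0 r X = mat r (dim_col X) (\<lambda>(a,b). X $$ (r0 + a, b))"

definition stack_zero :: "'a::zero mat \<Rightarrow> nat \<Rightarrow> 'a mat" where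
  "stack_zero R z = mat (dim_row R + z) (dim_col R) (\<lambda>(a,b). if a < dim_row R then R $$ (a,b) else 0)"

definition Eblk :: "nat \<Rightarrow> nat \<Rightarrow> 'a::{zero,one} mat" where
  "Eblk m L = mat (m*L) L (\<lambda>(a,b). if a = b then 1 else 0)"

text \<open>Q_i^{(m)} = diag(I_{(i-1)L}, Omega_i, I_{(m-i-1)L}).\<close>
definition Qemb :: "'a::{zero,one} mat \<Rightarrow> nat \<Rightarrow> nat \<Rightarrow> nat \<Rightarrow> 'a mat" where
  "Qemb Om i m L = mat (m*L) (m*L) (\<lambda>(a,b).
     let inb = (\<lambda>x. (i-1)*L \<le> x \<and> x < (i+1)*L) in
     if inb a \<and> inb b then Om $$ (a - (i-1)*L, b - (i-1)*L)
     else if \<not> inb a \<and> \<not> inb b \<and> a = b then 1 else 0)"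

fun qprod :: "(nat \<Rightarrow> 'a::comm_ring_1 mat) \<Rightarrow> nat \<Rightarrow> nat \<Rightarrow> nat \<Rightarrow> 'a mat" where
  "qprod Om 0 m L = 1\<^sub>m (m*L)"
| "qprod Om (Suc i) m L = Qemb (Om (Suc i)) (Suc i) m L * qprod Om i m L"

definition Qbar :: "(nat \<Rightarrow> 'a::comm_ring_1 mat) \<Rightarrow> nat \<Rightarrow> nat \<Rightarrow> 'a mat" where
  "Qbar Om k L = qprod Om k (k+1) L"

definition frob :: "complex mat \<Rightarrow> real" where
  "frob X = sqrt (\<Sum>a<dim_row X. \<Sum>b<dim_col X. (cmod (X $$ (a,b)))\<^sup>2)"

definition unitary :: "nat \<Rightarrow> complex mat \<Rightarrow> bool" where
  "unitary m U \<longleftrightarrow> U \<in> carrier_mat m m \<and> mat_adjoint U * U = 1\<^sub>m m"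

definition orthonormal_cols :: "complex mat \<Rightarrow> bool" where
  "orthonormal_cols V \<longleftrightarrow> mat_adjoint V * V = 1\<^sub>m (dim_col V)"

text \<open>Inverse of a square matrix (meaningful when it is nonsingular).\<close>
definition minv :: "complex mat \<Rightarrow> complex mat" where
  "minv X = (SOME Y. Y \<in> carrier_mat (dim_row X) (dim_row X) \<and>
              X * Y = 1\<^sub>m (dim_row X) \<and> Y * X = 1\<^sub>m (dim_row X))"

definition gmres_Y :: "complex mat \<Rightarrow> complex mat \<Rightarrow> nat \<Rightarrow> nat \<Rightarrow> complex mat" where
  "gmres_Y Hb S0 k L = (THE Y. Y \<in> carrier_mat (k*L) L \<and>
     (\<forall>Y' \<in> carrier_mat (k*L) L.
        frob (lead ((k+1)*L) (k*L) Hb * Y - Eblk (k+1) L * S0)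
        \<le> frob (lead ((k+1)*L) (k*L) Hb * Y' - Eblk (k+1) L * S0)))"

definition gmres_X :: "complex mat \<Rightarrow> complex mat \<Rightarrow> complex mat \<Rightarrow> complex mat \<Rightarrow> nat \<Rightarrow> nat \<Rightarrow> complex mat" where
  "gmres_X X0 W Hb S0 k L = X0 + lead (dim_row W) (k*L) W * gmres_Y Hb S0 k L"

definition fom_X :: "complex mat \<Rightarrow> complex mat \<Rightarrow> complex mat \<Rightarrow> complex mat \<Rightarrow> nat \<Rightarrow> nat \<Rightarrow> complex mat" where
  "fom_X X0 W Hb S0 k L = X0 + lead (dim_row W) (k*L) W * (minv (lead (k*L) (k*L) Hb) * (Eblk k L * S0))"

definition diag_real :: "nat \<Rightarrow> (nat \<Rightarrow> real) \<Rightarrow> complex mat" where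
  "diag_real L c = mat L L (\<lambda>(a,b). if a = b then complex_of_real (c a) else 0)"

end

theory Submission
  imports Defs
begin

text \<open>Write \<open>Y\<^sup>F\<close> for the block FOM coefficients, \<open>y\<close> for their last \<open>L \<times> L\<close> block and \<open>C\<close> for
  \<open>C\<^sub>j\<close> (with tilde). Because \<open>Qbar\<^sub>j Hbar\<^sub>j Y\<^sup>F = [R\<^sub>j Y\<^sup>F; 0]\<close>, the rotation \<open>\<Omega>\<^sub>j\<close> maps
  \<open>[C; H\<^sub>j\<^sub>+\<^sub>1\<^sub>,\<^sub>j y]\<close> to \<open>[w; 0]\<close>, so \<open>C = Q\<^sub>1\<^sub>1\<^sup>* w\<close> and \<open>H\<^sub>j\<^sub>+\<^sub>1\<^sub>,\<^sub>j y = Q\<^sub>1\<^sub>2\<^sup>* w\<close>.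
  For \<open>M = C\<^sup>-\<^sup>1 Q\<^sub>1\<^sub>1\<^sup>* Q\<^sub>1\<^sub>1 C\<close> the coefficients \<open>Y\<^sup>F M + [Y\<^sup>G\<^sub>j\<^sub>-\<^sub>1; 0] (I - M)\<close> have a rotated
  residual whose first \<open>jL\<close> rows vanish, which characterizes the block GMRES coefficients; since
  \<open>Y \<mapsto> X\<^sub>0 + W Y\<close> is affine, this gives \<open>X\<^sup>G\<^sub>j = X\<^sup>F\<^sub>j M + X\<^sup>G\<^sub>j\<^sub>-\<^sub>1 (I - M)\<close>.
  \<open>C\<close> is invertible because the residual \<open>F\<^sup>G\<^sub>j\<^sub>-\<^sub>1\<close> factors through it and has rank \<open>L\<close>, and the
  CS decomposition \<open>Q\<^sub>1\<^sub>1 = U\<^sub>1 \<C> V\<^sup>*\<close> rewrites \<open>M\<close> and \<open>I - M\<close> as \<open>C\<^sup>-\<^sup>1 V \<C>\<^sup>2 V\<^sup>* C\<close> and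
  \<open>C\<^sup>-\<^sup>1 V \<S>\<^sup>2 V\<^sup>* C\<close>.\<close>

section \<open>Stacked block matrices\<close>

lemma sum_lessThan_add_split: "(\<Sum>k<(a::nat)+b. f k) = (\<Sum>k<a. f k) + (\<Sum>k<b. f (a+k))"
  by (induct b) (auto simp: add.assoc)

lemma index_mult_mat_sum:
  assumes "A \<in> carrier_mat r c" "B \<in> carrier_mat c d" "i < r" "k < d"
  shows "(A * B) $$ (i,k) = (\<Sum>l<c. A $$ (i,l) * B $$ (l,k))"
  using assms by (auto simp: scalar_prod_def atLeast0LessThan intro!: sum.cong)

lemma mult_carrier_mat_square: "A \<in> carrier_mat n n \<Longrightarrow> B \<in> carrier_mat n n \<Longrightarrow> A * B \<in> carrier_mat n n"
  by auto

lemma assoc_mult_mat_dims: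
  "dim_col A = dim_row B \<Longrightarrow> dim_col B = dim_row C \<Longrightarrow> A * B * C = A * (B * (C::'a::comm_ring mat))"
  by (rule assoc_mult_mat[of A "dim_row A" "dim_col A" B "dim_col B" C "dim_col C"]) auto

lemma mult_add_distrib_mat_dims:
  "dim_col A = dim_row B \<Longrightarrow> dim_row C = dim_row B \<Longrightarrow> dim_col C = dim_col B \<Longrightarrow>
   A * (B + C) = A * B + A * (C::'a::comm_ring mat)"
  by (rule mult_add_distrib_mat[of A "dim_row A" "dim_row B" B "dim_col B" C]) auto

lemma lead_carrier[simp]: "lead r c X \<in> carrier_mat r c"
  by (simp add: lead_def)

lemma row_range_carrier[simp]: "row_range r0 r X \<in> carrier_mat r (dim_col X)"
  by (simp add: row_range_def)

lemma Eblk_carrier[simp]: "Eblk m L \<in> carrier_mat (m*L) L"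
  by (simp add: Eblk_def)

lemma lead_dims[simp]: "dim_row (lead r c X) = r" "dim_col (lead r c X) = c"
  by (simp_all add: lead_def)

lemma row_range_dims[simp]: "dim_row (row_range r0 r X) = r" "dim_col (row_range r0 r X) = dim_col X"
  by (simp_all add: row_range_def)

lemma Eblk_dims[simp]: "dim_row (Eblk m L) = m*L" "dim_col (Eblk m L) = L"
  by (simp_all add: Eblk_def)

lemma minus_zero_mat: "A \<in> carrier_mat r c \<Longrightarrow> A - 0\<^sub>m r c = (A :: 'a::group_add mat)"
  by (rule eq_matI) auto

lemma minus_mat_eq_0_imp_eq:
  assumes "A \<in> carrier_mat r c" "B \<in> carrier_mat r c" "A - B = (0\<^sub>m r c :: 'a::ab_group_add mat)"
  shows "A = B"
proof (rule eq_matI)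
  fix i k assume ik: "i < dim_row B" "k < dim_col B"
  have "A $$ (i,k) - B $$ (i,k) = (A - B) $$ (i,k)" using assms(1,2) ik by simp
  also have "\<dots> = 0" using assms ik by simp
  finally show "A $$ (i,k) = B $$ (i,k)" by simp
qed (use assms in auto)

lemma eq_minus_if_add_mat_eq:
  fixes A B :: "'a::ab_group_add mat"
  assumes "A \<in> carrier_mat r c" "B \<in> carrier_mat r c" "A + B = C"
  shows "B = C - A"
  unfolding assms(3)[symmetric] by (rule eq_matI) (use assms in auto)

lemma append_rows_eq_mat:
  assumes "dim_col A = dim_col B"
  shows "A @\<^sub>r B = mat (dim_row A + dim_row B) (dim_col A)
     (\<lambda>(i,k). if i < dim_row A then A $$ (i,k) else B $$ (i - dim_row A, k))"
  using assms by (intro eq_matI) (auto simp: append_rows_def)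

lemma append_rows_dims[simp]:
  "dim_row (A @\<^sub>r B) = dim_row A + dim_row B" "dim_col (A @\<^sub>r B) = dim_col A"
  by (auto simp: append_rows_def)

lemma append_rows_mult:
  assumes "A \<in> carrier_mat ra c" "B \<in> carrier_mat rb c" "C \<in> carrier_mat c d"
  shows "(A @\<^sub>r B) * C = A * C @\<^sub>r B * C"
proof (rule eq_matI)
  fix i k assume ik: "i < dim_row (A * C @\<^sub>r B * C)" "k < dim_col (A * C @\<^sub>r B * C)"
  have "((A @\<^sub>r B) * C) $$ (i,k) = (\<Sum>l<c. (A @\<^sub>r B) $$ (i,l) * C $$ (l,k))"
    by (rule index_mult_mat_sum[OF carrier_append_rows[OF assms(1,2)] assms(3)]) (use ik assms in auto)
  also have "\<dots> = (A * C @\<^sub>r B * C) $$ (i,k)"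
    using assms ik
    by (auto simp del: index_mult_mat(1) simp: index_mult_mat_sum append_rows_eq_mat)
  finally show "((A @\<^sub>r B) * C) $$ (i,k) = (A * C @\<^sub>r B * C) $$ (i,k)" .
qed (use assms in auto)

lemma append_rows_add:
  assumes "A \<in> carrier_mat ra c" "B \<in> carrier_mat rb c" "C \<in> carrier_mat ra c" "D \<in> carrier_mat rb c"
  shows "(A @\<^sub>r B) + (C @\<^sub>r D) = (A + C) @\<^sub>r (B + D)"
  by (rule eq_matI) (use assms in \<open>auto simp: append_rows_eq_mat\<close>)

lemma append_rows_minus:
  assumes "A \<in> carrier_mat ra c" "B \<in> carrier_mat rb c" "C \<in> carrier_mat ra c" "D \<in> carrier_mat rb c"
  shows "(A @\<^sub>r B) - (C @\<^sub>r D) = (A - C) @\<^sub>r (B - D)"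
  by (rule eq_matI) (use assms in \<open>auto simp: append_rows_eq_mat\<close>)

lemma append_rows_assoc:
  assumes "A \<in> carrier_mat ra c" "B \<in> carrier_mat rb c" "C \<in> carrier_mat rc c"
  shows "(A @\<^sub>r B) @\<^sub>r C = A @\<^sub>r B @\<^sub>r C"
  by (rule eq_matI) (use assms in \<open>auto simp: append_rows_eq_mat\<close>)

lemma append_rows_zero: "0\<^sub>m (a+b) c = 0\<^sub>m a c @\<^sub>r 0\<^sub>m b c"
  by (rule eq_matI) (auto simp: append_rows_eq_mat)

lemma row_range_append_rows_top:
  assumes "A \<in> carrier_mat ra c" "B \<in> carrier_mat rb c"
  shows "row_range 0 ra (A @\<^sub>r B) = A"
  by (rule eq_matI) (use assms in \<open>auto simp: append_rows_eq_mat row_range_def\<close>)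

lemma row_range_append_rows_bottom:
  assumes "A \<in> carrier_mat ra c" "B \<in> carrier_mat rb c"
  shows "row_range ra rb (A @\<^sub>r B) = B"
  by (rule eq_matI) (use assms in \<open>auto simp: append_rows_eq_mat row_range_def\<close>)

lemma append_rows_row_range:
  assumes "X \<in> carrier_mat (r1+r2) c"
  shows "row_range 0 r1 X @\<^sub>r row_range r1 r2 X = X"
  by (rule eq_matI) (use assms in \<open>auto simp: append_rows_eq_mat row_range_def\<close>)

lemma append_rows_inj:
  assumes "A \<in> carrier_mat ra c" "B \<in> carrier_mat rb c" "C \<in> carrier_mat ra c" "D \<in> carrier_mat rb c"
    and "A @\<^sub>r B = C @\<^sub>r D"
  shows "A = C" "B = D"
  using row_range_append_rows_top[OF assms(1,2)] row_range_append_rows_top[OF assms(3,4)]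
    row_range_append_rows_bottom[OF assms(1,2)] row_range_append_rows_bottom[OF assms(3,4)] assms(5)
  by auto

lemma stack_zero_eq_append_rows: "stack_zero R z = R @\<^sub>r 0\<^sub>m z (dim_col R)"
  by (rule eq_matI) (auto simp: append_rows_eq_mat stack_zero_def)

lemma four_block_mat_mult_append_rows:
  assumes "M11 \<in> carrier_mat r1 c1" "M12 \<in> carrier_mat r1 c2" "M21 \<in> carrier_mat r2 c1" "M22 \<in> carrier_mat r2 c2"
    "X \<in> carrier_mat c1 d" "Y \<in> carrier_mat c2 d"
  shows "four_block_mat M11 M12 M21 M22 * (X @\<^sub>r Y) = (M11 * X + M12 * Y) @\<^sub>r (M21 * X + M22 * Y)"
proof (rule eq_matI)
  let ?M = "four_block_mat M11 M12 M21 M22"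
  fix i k assume ik: "i < dim_row ((M11 * X + M12 * Y) @\<^sub>r (M21 * X + M22 * Y))"
     "k < dim_col ((M11 * X + M12 * Y) @\<^sub>r (M21 * X + M22 * Y))"
  have "(?M * (X @\<^sub>r Y)) $$ (i,k) = (\<Sum>l<c1+c2. ?M $$ (i,l) * (X @\<^sub>r Y) $$ (l,k))"
    by (rule index_mult_mat_sum) (use assms ik in auto)
  also have "\<dots> = (\<Sum>l<c1. ?M $$ (i,l) * (X @\<^sub>r Y) $$ (l,k)) + (\<Sum>l<c2. ?M $$ (i,c1+l) * (X @\<^sub>r Y) $$ (c1+l,k))"
    by (rule sum_lessThan_add_split)
  also have "\<dots> = ((M11 * X + M12 * Y) @\<^sub>r (M21 * X + M22 * Y)) $$ (i,k)"
    using assms ik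
    by (auto simp del: index_mult_mat(1) simp: append_rows_eq_mat four_block_mat_def index_mult_mat_sum
        intro!: sum.cong arg_cong2[where f="(+)"])
  finally show "(?M * (X @\<^sub>r Y)) $$ (i,k) = ((M11 * X + M12 * Y) @\<^sub>r (M21 * X + M22 * Y)) $$ (i,k)" .
qed (use assms in auto)

lemma block_diag_mult_append_rows:
  assumes "A \<in> carrier_mat a a" "D \<in> carrier_mat b b" "X1 \<in> carrier_mat a c" "X2 \<in> carrier_mat b c"
  shows "four_block_mat A (0\<^sub>m a b) (0\<^sub>m b a) D * (X1 @\<^sub>r X2) = A * X1 @\<^sub>r D * (X2::'a::comm_ring mat)"
  using assms by (subst four_block_mat_mult_append_rows[of _ a a _ b _ b]) auto

lemma affine_combination_mult:
  fixes X0 :: "'a::comm_ring_1 mat"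
  assumes X0: "X0 \<in> carrier_mat n c" and W: "W \<in> carrier_mat n k"
    and Y1: "Y1 \<in> carrier_mat k c" and Y2: "Y2 \<in> carrier_mat k c" and M: "M \<in> carrier_mat c c"
  shows "X0 + W * (Y1 * M + Y2 * (1\<^sub>m c - M)) = (X0 + W * Y1) * M + (X0 + W * Y2) * (1\<^sub>m c - M)"
proof -
  have M': "1\<^sub>m c - M \<in> carrier_mat c c" using M by auto
  have "X0 + W * (Y1 * M + Y2 * (1\<^sub>m c - M)) = X0 + (W * Y1 * M + W * Y2 * (1\<^sub>m c - M))"
    using mult_add_distrib_mat[OF W mult_carrier_mat[OF Y1 M] mult_carrier_mat[OF Y2 M']]
      assoc_mult_mat[OF W Y1 M] assoc_mult_mat[OF W Y2 M'] by simp
  also have "\<dots> = (X0 * M + W * Y1 * M) + ((X0 - X0 * M) + W * Y2 * (1\<^sub>m c - M))"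
    using X0 W Y1 Y2 M M' by (intro eq_matI) auto
  also have "X0 - X0 * M = X0 * (1\<^sub>m c - M)"
    using mult_minus_distrib_mat[OF X0 one_carrier_mat M] X0 by simp
  also have "(X0 * M + W * Y1 * M) + (X0 * (1\<^sub>m c - M) + W * Y2 * (1\<^sub>m c - M))
      = (X0 + W * Y1) * M + (X0 + W * Y2) * (1\<^sub>m c - M)"
    using add_mult_distrib_mat[OF X0 mult_carrier_mat[OF W Y1] M] add_mult_distrib_mat[OF X0 mult_carrier_mat[OF W Y2] M']
    by simp
  finally show ?thesis .
qed

section \<open>Adjoints, unitary matrices and inverses\<close>

lemma mat_adjoint_dims[simp]: "dim_row (mat_adjoint A) = dim_col A" "dim_col (mat_adjoint A) = dim_row A"
  by (auto simp: mat_adjoint_def)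

lemma index_mat_adjoint[simp]: "i < dim_col A \<Longrightarrow> k < dim_row A \<Longrightarrow> mat_adjoint A $$ (i,k) = cnj (A $$ (k,i))"
  by (auto simp: mat_adjoint_def mat_of_rows_def)

lemma mat_adjoint_carrier[simp]: "A \<in> carrier_mat r c \<Longrightarrow> mat_adjoint A \<in> carrier_mat c r"
  by auto

lemma mat_adjoint_adjoint[simp]: "mat_adjoint (mat_adjoint (A::complex mat)) = A"
  by (rule eq_matI) auto

lemma mat_adjoint_zero[simp]: "mat_adjoint (0\<^sub>m r c :: complex mat) = 0\<^sub>m c r"
  by (rule eq_matI) auto

lemma mat_adjoint_one[simp]: "mat_adjoint (1\<^sub>m r :: complex mat) = 1\<^sub>m r"
  by (rule eq_matI) auto

lemma mat_adjoint_mult: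
  assumes "A \<in> carrier_mat r c" "B \<in> carrier_mat c d"
  shows "mat_adjoint (A * (B::complex mat)) = mat_adjoint B * mat_adjoint A"
proof (rule eq_matI)
  fix i k assume ik: "i < dim_row (mat_adjoint B * mat_adjoint A)" "k < dim_col (mat_adjoint B * mat_adjoint A)"
  have "(mat_adjoint B * mat_adjoint A) $$ (i,k) = (\<Sum>l<c. mat_adjoint B $$ (i,l) * mat_adjoint A $$ (l,k))"
    by (rule index_mult_mat_sum) (use ik assms in auto)
  also have "\<dots> = mat_adjoint (A * B) $$ (i,k)"
    using assms ik by (auto simp del: index_mult_mat(1) simp: index_mult_mat_sum mult.commute)
  finally show "mat_adjoint (A * B) $$ (i,k) = (mat_adjoint B * mat_adjoint A) $$ (i,k)" ..
qed (use assms in auto)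

lemma mat_adjoint_four_block_mat:
  assumes "A \<in> carrier_mat r1 c1" "B \<in> carrier_mat r1 c2" "C \<in> carrier_mat r2 c1" "D \<in> carrier_mat r2 c2"
  shows "mat_adjoint (four_block_mat A B C (D::complex mat)) =
     four_block_mat (mat_adjoint A) (mat_adjoint C) (mat_adjoint B) (mat_adjoint D)"
  by (rule eq_matI) (use assms in \<open>auto simp: four_block_mat_def\<close>)

lemma unitary_carrier: "unitary m U \<Longrightarrow> U \<in> carrier_mat m m"
  by (simp add: unitary_def)

lemma unitary_adjoint_mult: "unitary m U \<Longrightarrow> mat_adjoint U * U = 1\<^sub>m m"
  by (simp add: unitary_def)

lemma unitary_mult_adjoint:
  assumes "unitary m U" shows "U * mat_adjoint U = 1\<^sub>m m"
  using assms mat_mult_left_right_inverse[of "mat_adjoint U" m U] unfolding unitary_def by auto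

lemma unitary_mult:
  assumes "unitary m U" "unitary m V" shows "unitary m (U * V)"
proof -
  have c: "U \<in> carrier_mat m m" "V \<in> carrier_mat m m" using assms unfolding unitary_def by auto
  have "mat_adjoint (U * V) * (U * V) = mat_adjoint V * (mat_adjoint U * U) * V"
    using c by (simp add: mat_adjoint_mult[OF c] assoc_mult_mat_dims)
  also have "\<dots> = 1\<^sub>m m" using assms c unfolding unitary_def by auto
  finally show ?thesis using c unfolding unitary_def by auto
qed

lemma unitary_block_diag:
  assumes "unitary a A" "unitary b D"
  shows "unitary (a+b) (four_block_mat A (0\<^sub>m a b) (0\<^sub>m b a) D)"
proof -
  have c: "A \<in> carrier_mat a a" "D \<in> carrier_mat b b" using assms unfolding unitary_def by auto
  have "mat_adjoint (four_block_mat A (0\<^sub>m a b) (0\<^sub>m b a) D) * four_block_mat A (0\<^sub>m a b) (0\<^sub>m b a) D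
      = four_block_mat (mat_adjoint A) (0\<^sub>m a b) (0\<^sub>m b a) (mat_adjoint D) * four_block_mat A (0\<^sub>m a b) (0\<^sub>m b a) D"
    using c by (simp add: mat_adjoint_four_block_mat[of _ a a _ b _ b])
  also have "\<dots> = four_block_mat (mat_adjoint A * A) (0\<^sub>m a b) (0\<^sub>m b a) (mat_adjoint D * D)"
    by (subst mult_four_block_mat) (use c in auto)
  also have "\<dots> = 1\<^sub>m (a+b)" using assms unfolding unitary_def by auto
  finally show ?thesis using c unfolding unitary_def by auto
qed

lemma minv_inverse:
  assumes "invertible_mat X" "X \<in> carrier_mat m m"
  shows "minv X \<in> carrier_mat m m" "X * minv X = 1\<^sub>m m" "minv X * X = 1\<^sub>m m"
proof -
  obtain Y where Y: "X * Y = 1\<^sub>m m" "Y * X = 1\<^sub>m (dim_row Y)"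
    using assms unfolding invertible_mat_def inverts_mat_def by auto
  then have "Y \<in> carrier_mat m m"
    using assms(2) by (metis carrier_matD(2) carrier_matI index_mult_mat(3) index_one_mat(3))
  then have "\<exists>Y. Y \<in> carrier_mat (dim_row X) (dim_row X) \<and> X * Y = 1\<^sub>m (dim_row X) \<and> Y * X = 1\<^sub>m (dim_row X)"
    using Y assms(2) by auto
  from someI_ex[OF this] assms(2)
  show "minv X \<in> carrier_mat m m" "X * minv X = 1\<^sub>m m" "minv X * X = 1\<^sub>m m"
    unfolding minv_def by auto
qed

section \<open>Frobenius norm and least squares through a QR factorization\<close>

lemma frob_nonneg: "frob X \<ge> 0"
  unfolding frob_def by (simp add: sum_nonneg)

lemma frob_squared: "(frob X)\<^sup>2 = (\<Sum>a<dim_row X. \<Sum>b<dim_col X. (cmod (X $$ (a,b)))\<^sup>2)"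
  unfolding frob_def by (simp add: sum_nonneg)

lemma frob_eq_sqrt_trace_gram: "frob Y = sqrt (\<Sum>b<dim_col Y. Re ((mat_adjoint Y * Y) $$ (b,b)))"
proof -
  have "(\<Sum>a<dim_row Y. (cmod (Y $$ (a,b)))\<^sup>2) = Re ((mat_adjoint Y * Y) $$ (b,b))"
    if b: "b < dim_col Y" for b
  proof -
    have "(mat_adjoint Y * Y) $$ (b,b) = (\<Sum>a<dim_row Y. mat_adjoint Y $$ (b,a) * Y $$ (a,b))"
      by (rule index_mult_mat_sum[of _ _ "dim_row Y" _ "dim_col Y"]) (use b in auto)
    also have "\<dots> = (\<Sum>a<dim_row Y. of_real ((cmod (Y $$ (a,b)))\<^sup>2))"
      by (rule sum.cong[OF refl], subst complex_norm_square) (use b in \<open>simp add: mult.commute\<close>)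
    finally show ?thesis by simp
  qed
  then have "(\<Sum>a<dim_row Y. \<Sum>b<dim_col Y. (cmod (Y $$ (a,b)))\<^sup>2) = (\<Sum>b<dim_col Y. Re ((mat_adjoint Y * Y) $$ (b,b)))"
    by (subst sum.swap) simp
  then show ?thesis unfolding frob_def by simp
qed

lemma frob_unitary_mult:
  assumes "Q \<in> carrier_mat r r" "mat_adjoint Q * Q = 1\<^sub>m r" "X \<in> carrier_mat r c"
  shows "frob (Q * X) = frob X"
proof -
  have "mat_adjoint Q * (Q * X) = X"
    using assms by (simp add: assoc_mult_mat[symmetric, of _ r r Q r X c])
  then have "mat_adjoint (Q * X) * (Q * X) = mat_adjoint X * X"
    using assms by (simp add: mat_adjoint_mult[OF assms(1,3)] assoc_mult_mat[of _ c r _ r _ c])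
  then show ?thesis unfolding frob_eq_sqrt_trace_gram using assms by simp
qed

lemma frob_append_rows:
  assumes "A \<in> carrier_mat ra c" "B \<in> carrier_mat rb c"
  shows "(frob (A @\<^sub>r B))\<^sup>2 = (frob A)\<^sup>2 + (frob B)\<^sup>2"
proof -
  have "(frob (A @\<^sub>r B))\<^sup>2 = (\<Sum>a<ra+rb. \<Sum>b<c. (cmod ((A @\<^sub>r B) $$ (a,b)))\<^sup>2)"
    using assms by (simp add: frob_squared)
  also have "\<dots> = (\<Sum>a<ra. \<Sum>b<c. (cmod ((A @\<^sub>r B) $$ (a,b)))\<^sup>2)
      + (\<Sum>a<rb. \<Sum>b<c. (cmod ((A @\<^sub>r B) $$ (ra+a,b)))\<^sup>2)"
    by (rule sum_lessThan_add_split)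
  also have "\<dots> = (frob A)\<^sup>2 + (frob B)\<^sup>2"
    using assms by (simp add: frob_squared append_rows_eq_mat)
  finally show ?thesis .
qed

lemma frob_eq_0_iff:
  assumes "X \<in> carrier_mat r c"
  shows "frob X = 0 \<longleftrightarrow> X = 0\<^sub>m r c"
proof
  assume "frob X = 0"
  then have sum0: "(\<Sum>a<r. \<Sum>b<c. (cmod (X $$ (a,b)))\<^sup>2) = 0"
    using frob_squared[of X] assms by simp
  have "(cmod (X $$ (a,b)))\<^sup>2 = 0" if "a < r" "b < c" for a b
  proof -
    have "(\<Sum>b<c. (cmod (X $$ (a,b)))\<^sup>2) = 0"
      using sum0 that sum_nonneg_eq_0_iff[of "{..<r}" "\<lambda>a. \<Sum>b<c. (cmod (X $$ (a,b)))\<^sup>2"]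
      by (simp add: sum_nonneg)
    then show ?thesis
      using that sum_nonneg_eq_0_iff[of "{..<c}" "\<lambda>b. (cmod (X $$ (a,b)))\<^sup>2"] by simp
  qed
  then show "X = 0\<^sub>m r c" using assms by (intro eq_matI) auto
next
  assume "X = 0\<^sub>m r c"
  then show "frob X = 0" unfolding frob_def by (auto intro!: sum.neutral)
qed

text \<open>Rotating by \<open>Q\<close> splits the residual as \<open>Q (H Y - E) = [R (Y - Y\<^sub>0); K]\<close> with \<open>K\<close> independent
  of \<open>Y\<close>, so Pythagoras applies in the Frobenius norm.\<close>

lemma qr_residual_pythagoras:
  fixes H E Q R Y Y0 :: "complex mat"
  assumes Q: "Q \<in> carrier_mat (m+z) (m+z)" "mat_adjoint Q * Q = 1\<^sub>m (m+z)"
    and R: "R \<in> carrier_mat m m" and QH: "Q * H = stack_zero R z"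
    and H: "H \<in> carrier_mat (m+z) m" and E: "E \<in> carrier_mat (m+z) c"
    and Y0: "Y0 \<in> carrier_mat m c" and Y: "Y \<in> carrier_mat m c"
    and top: "row_range 0 m (Q * (H * Y0 - E)) = 0\<^sub>m m c"
  shows "(frob (H * Y - E))\<^sup>2 = (frob (R * (Y - Y0)))\<^sup>2 + (frob (H * Y0 - E))\<^sup>2"
proof -
  define K where "K = row_range m z (Q * (H * Y0 - E))"
  have Kc: "K \<in> carrier_mat z c" unfolding K_def using row_range_carrier[of m z "Q * (H * Y0 - E)"] E by simp
  have RYc: "R * (Y - Y0) \<in> carrier_mat m c" using R Y0 by (intro mult_carrier_mat minus_carrier_mat)
  have "Q * (H * Y0 - E) \<in> carrier_mat (m+z) c" using Q H Y0 E by auto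
  from append_rows_row_range[OF this] have res0: "Q * (H * Y0 - E) = 0\<^sub>m m c @\<^sub>r K"
    using top unfolding K_def by simp
  have "H * (Y - Y0) = H * Y - H * Y0" by (rule mult_minus_distrib_mat[OF H Y Y0])
  then have "H * Y - E = H * (Y - Y0) + (H * Y0 - E)"
    using H Y Y0 E by (intro eq_matI) auto
  then have "Q * (H * Y - E) = Q * H * (Y - Y0) + Q * (H * Y0 - E)"
    using Q H Y Y0 E by (simp add: mult_add_distrib_mat_dims assoc_mult_mat_dims)
  also have "Q * H * (Y - Y0) = R * (Y - Y0) @\<^sub>r 0\<^sub>m z c"
    using QH R append_rows_mult[OF R zero_carrier_mat[of z m] minus_carrier_mat[OF Y0, of Y]] Y Y0
    unfolding stack_zero_eq_append_rows by auto
  also have "(R * (Y - Y0) @\<^sub>r 0\<^sub>m z c) + Q * (H * Y0 - E) = R * (Y - Y0) @\<^sub>r K"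
    unfolding res0 using RYc Kc by (subst append_rows_add[of _ m c _ z]) auto
  finally have rotated: "Q * (H * Y - E) = R * (Y - Y0) @\<^sub>r K" .
  have "frob (H * Y - E) = frob (Q * (H * Y - E))"
    by (rule frob_unitary_mult[OF Q, symmetric]) (use H Y E in auto)
  then have "(frob (H * Y - E))\<^sup>2 = (frob (R * (Y - Y0)))\<^sup>2 + (frob K)\<^sup>2"
    using frob_append_rows[OF RYc Kc] rotated by simp
  moreover have "frob (H * Y0 - E) = frob (Q * (H * Y0 - E))"
    by (rule frob_unitary_mult[OF Q, symmetric]) (use H Y0 E in auto)
  then have "(frob (H * Y0 - E))\<^sup>2 = (frob K)\<^sup>2"
    using frob_append_rows[OF zero_carrier_mat Kc] frob_eq_0_iff[OF zero_carrier_mat[of m c]] res0 by simp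
  ultimately show ?thesis by simp
qed

lemma gmres_Y_eqI:
  fixes Hb S0 Q R Y0 :: "complex mat"
  assumes Q: "Q \<in> carrier_mat ((k+1)*L) ((k+1)*L)" "mat_adjoint Q * Q = 1\<^sub>m ((k+1)*L)"
    and R: "R \<in> carrier_mat (k*L) (k*L)" "invertible_mat R"
    and QH: "Q * lead ((k+1)*L) (k*L) Hb = stack_zero R L"
    and Y0: "Y0 \<in> carrier_mat (k*L) L" and S0: "S0 \<in> carrier_mat L L"
    and top: "row_range 0 (k*L) (Q * (lead ((k+1)*L) (k*L) Hb * Y0 - Eblk (k+1) L * S0)) = 0\<^sub>m (k*L) L"
  shows "gmres_Y Hb S0 k L = Y0"
proof -
  define H where "H = lead ((k+1)*L) (k*L) Hb"
  define E where "E = Eblk (k+1) L * S0"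
  have kL: "(k+1)*L = k*L + L" by simp
  have H: "H \<in> carrier_mat (k*L+L) (k*L)" unfolding H_def kL by simp
  have E: "E \<in> carrier_mat (k*L+L) L"
    unfolding E_def using mult_carrier_mat[OF Eblk_carrier[of "k+1" L] S0] unfolding kL .
  have pythagoras: "(frob (H * Y - E))\<^sup>2 = (frob (R * (Y - Y0)))\<^sup>2 + (frob (H * Y0 - E))\<^sup>2"
    if "Y \<in> carrier_mat (k*L) L" for Y
    using qr_residual_pythagoras[OF Q[unfolded kL] R(1) QH[folded H_def, unfolded kL] H E Y0 that]
      top[folded H_def E_def] by simp
  have minimal: "frob (H * Y0 - E) \<le> frob (H * Y - E)" if "Y \<in> carrier_mat (k*L) L" for Y
    using pythagoras[OF that] by (intro power2_le_imp_le[OF _ frob_nonneg]) simp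
  show ?thesis
    unfolding gmres_Y_def H_def[symmetric] E_def[symmetric]
  proof (rule the_equality)
    show "Y0 \<in> carrier_mat (k*L) L \<and> (\<forall>Y'\<in>carrier_mat (k*L) L. frob (H * Y0 - E) \<le> frob (H * Y' - E))"
      using Y0 minimal by blast
  next
    fix Y assume Y: "Y \<in> carrier_mat (k*L) L \<and> (\<forall>Y'\<in>carrier_mat (k*L) L. frob (H * Y - E) \<le> frob (H * Y' - E))"
    then have Yc: "Y \<in> carrier_mat (k*L) L" and "frob (H * Y - E) \<le> frob (H * Y0 - E)"
      using Y0 by blast+
    then have "frob (H * Y - E) = frob (H * Y0 - E)"
      using minimal[OF Yc] by linarith
    then have "frob (R * (Y - Y0)) = 0"
      using pythagoras[OF Yc] by simp
    then have RY: "R * (Y - Y0) = 0\<^sub>m (k*L) L"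
      using frob_eq_0_iff[OF mult_carrier_mat[OF R(1) minus_carrier_mat[OF Y0, of Y]]] by simp
    have "Y - Y0 = minv R * (R * (Y - Y0))"
      using minv_inverse[OF R(2,1)] R Yc Y0 by (simp add: assoc_mult_mat_dims[symmetric])
    then have "Y - Y0 = 0\<^sub>m (k*L) L" using RY minv_inverse[OF R(2,1)] by simp
    then show "Y = Y0" using Yc Y0 by (rule minus_mat_eq_0_imp_eq[rotated 2])
  qed
qed

section \<open>The progressive QR factorization\<close>

lemma Qemb_last:
  assumes "Om \<in> carrier_mat (2*L) (2*L)"
  shows "Qemb Om (Suc i) (Suc i + 1) L = four_block_mat (1\<^sub>m (i*L)) (0\<^sub>m (i*L) (2*L)) (0\<^sub>m (2*L) (i*L)) Om"
  by (rule eq_matI) (use assms in \<open>auto simp: Qemb_def four_block_mat_def Let_def\<close>)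

lemma Qemb_extend:
  assumes "Suc i + 1 \<le> m"
  shows "Qemb Om (Suc i) (m+1) L = four_block_mat (Qemb Om (Suc i) m L) (0\<^sub>m (m*L) L) (0\<^sub>m L (m*L)) (1\<^sub>m L)"
proof -
  have "(Suc i + 1) * L \<le> m * L" using assms by (rule mult_le_mono1)
  then show ?thesis by (intro eq_matI) (auto simp: Qemb_def four_block_mat_def Let_def)
qed

lemma Qemb_carrier[simp]: "Qemb Om i m L \<in> carrier_mat (m*L) (m*L)"
  by (simp add: Qemb_def)

lemma qprod_carrier[simp]: "qprod Om i m L \<in> carrier_mat (m*L) (m*L)"
  by (induct i) (auto intro: mult_carrier_mat[OF Qemb_carrier])

lemma qprod_extend:
  assumes "i < m"
  shows "qprod Om i (m+1) L = four_block_mat (qprod Om i m L) (0\<^sub>m (m*L) L) (0\<^sub>m L (m*L)) (1\<^sub>m L)"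
  using assms
proof (induct i)
  case 0
  show ?case using four_block_one_mat[of "m*L" L] by (simp add: add.commute)
next
  case (Suc i)
  have "qprod Om (Suc i) (m+1) L
      = four_block_mat (Qemb (Om (Suc i)) (Suc i) m L) (0\<^sub>m (m*L) L) (0\<^sub>m L (m*L)) (1\<^sub>m L)
      * four_block_mat (qprod Om i m L) (0\<^sub>m (m*L) L) (0\<^sub>m L (m*L)) (1\<^sub>m L)"
    using Suc Qemb_extend[of i m "Om (Suc i)" L] by simp
  also have "\<dots> = four_block_mat (Qemb (Om (Suc i)) (Suc i) m L * qprod Om i m L) (0\<^sub>m (m*L) L) (0\<^sub>m L (m*L)) (1\<^sub>m L)"
    using mult_four_block_mat[OF Qemb_carrier[of "Om (Suc i)" "Suc i" m L] zero_carrier_mat zero_carrier_mat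
        one_carrier_mat[of L] qprod_carrier[of Om i m L] zero_carrier_mat zero_carrier_mat one_carrier_mat]
      Qemb_carrier[of "Om (Suc i)" "Suc i" m L] qprod_carrier[of Om i m L]
    by simp
  finally show ?case by simp
qed

lemma Qbar_Suc:
  assumes "Om (Suc k) \<in> carrier_mat (2*L) (2*L)"
  shows "Qbar Om (Suc k) L = four_block_mat (1\<^sub>m (k*L)) (0\<^sub>m (k*L) (2*L)) (0\<^sub>m (2*L) (k*L)) (Om (Suc k))
     * four_block_mat (Qbar Om k L) (0\<^sub>m ((k+1)*L) L) (0\<^sub>m L ((k+1)*L)) (1\<^sub>m L)"
proof -
  have "Qbar Om (Suc k) L = Qemb (Om (Suc k)) (Suc k) (Suc k + 1) L * qprod Om k (Suc k + 1) L"
    unfolding Qbar_def by simp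
  also have "qprod Om k (Suc k + 1) L = four_block_mat (Qbar Om k L) (0\<^sub>m ((k+1)*L) L) (0\<^sub>m L ((k+1)*L)) (1\<^sub>m L)"
    unfolding Qbar_def using qprod_extend[of k "Suc k" Om L] by simp
  finally show ?thesis using Qemb_last[OF assms] by simp
qed

lemma Qbar_unitary:
  assumes "\<forall>i. 1 \<le> i \<and> i \<le> j \<longrightarrow> unitary (2*L) (Om i)" "k \<le> j"
  shows "unitary ((k+1)*L) (Qbar Om k L)"
  using assms(2)
proof (induct k)
  case 0
  show ?case by (simp add: Qbar_def unitary_def)
next
  case (Suc k)
  have U: "unitary (2*L) (Om (Suc k))" using assms(1) Suc by auto
  have "unitary (k*L + 2*L) (four_block_mat (1\<^sub>m (k*L)) (0\<^sub>m (k*L) (2*L)) (0\<^sub>m (2*L) (k*L)) (Om (Suc k)))"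
    by (rule unitary_block_diag[OF _ U]) (simp add: unitary_def)
  moreover have "unitary ((k+1)*L + L) (four_block_mat (Qbar Om k L) (0\<^sub>m ((k+1)*L) L) (0\<^sub>m L ((k+1)*L)) (1\<^sub>m L))"
    by (rule unitary_block_diag) (use Suc in \<open>auto simp: unitary_def\<close>)
  moreover have "k*L + 2*L = (Suc k + 1) * L" "(k+1)*L + L = (Suc k + 1) * L" by simp_all
  ultimately show ?case
    unfolding Qbar_Suc[of Om k L, OF unitary_carrier[OF U]] by (metis unitary_mult)
qed

section \<open>Block Arnoldi structure\<close>

lemma lead_full: "X \<in> carrier_mat r c \<Longrightarrow> lead r c X = X"
  by (rule eq_matI) (auto simp: lead_def)

lemma row_range_stack_zero: "Y \<in> carrier_mat p c \<Longrightarrow> row_range p L (stack_zero Y L) = 0\<^sub>m L c"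
  by (rule eq_matI) (auto simp: row_range_def stack_zero_def)

lemma lead_mult_stack_zero:
  assumes Y: "Y \<in> carrier_mat p c"
  shows "lead r (p+L) X * stack_zero Y L = lead r p X * Y"
proof (rule eq_matI)
  fix a b assume ab: "a < dim_row (lead r p X * Y)" "b < dim_col (lead r p X * Y)"
  have "(lead r (p+L) X * stack_zero Y L) $$ (a,b) = (\<Sum>k<p+L. lead r (p+L) X $$ (a,k) * stack_zero Y L $$ (k,b))"
    by (rule index_mult_mat_sum[of _ r "p+L" _ c]) (use ab Y in \<open>auto simp: stack_zero_def\<close>)
  also have "\<dots> = (\<Sum>k<p. lead r (p+L) X $$ (a,k) * stack_zero Y L $$ (k,b))
     + (\<Sum>k<L. lead r (p+L) X $$ (a,p+k) * stack_zero Y L $$ (p+k,b))"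
    by (rule sum_lessThan_add_split)
  also have "\<dots> = (\<Sum>k<p. lead r p X $$ (a,k) * Y $$ (k,b))"
    using ab Y by (auto simp: lead_def stack_zero_def)
  also have "\<dots> = (lead r p X * Y) $$ (a,b)"
    by (rule index_mult_mat_sum[symmetric, of _ r p _ c]) (use ab Y in auto)
  finally show "(lead r (p+L) X * stack_zero Y L) $$ (a,b) = (lead r p X * Y) $$ (a,b)" .
qed (use Y in \<open>auto simp: stack_zero_def\<close>)

lemma hessenberg_mult:
  assumes Hb: "Hb \<in> carrier_mat (p+L+L) (p+L)" and Z: "Z \<in> carrier_mat (p+L) c"
    and zero: "\<And>a k. p+L \<le> a \<Longrightarrow> a < p+L+L \<Longrightarrow> k < p \<Longrightarrow> Hb $$ (a,k) = 0"
  shows "Hb * Z = lead (p+L) (p+L) Hb * Z @\<^sub>r mat L L (\<lambda>(a,b). Hb $$ (p+L+a, p+b)) * row_range p L Z"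
    (is "_ = ?top @\<^sub>r ?H * ?Z")
proof (rule eq_matI)
  fix a b assume "a < dim_row (?top @\<^sub>r ?H * ?Z)" "b < dim_col (?top @\<^sub>r ?H * ?Z)"
  then have a: "a < p+L+L" and b: "b < c" using Z by auto
  have split: "(Hb * Z) $$ (a,b) = (\<Sum>k<p. Hb $$ (a,k) * Z $$ (k,b)) + (\<Sum>k<L. Hb $$ (a,p+k) * Z $$ (p+k,b))"
    by (subst index_mult_mat_sum[OF Hb Z a b], rule sum_lessThan_add_split)
  show "(Hb * Z) $$ (a,b) = (?top @\<^sub>r ?H * ?Z) $$ (a,b)"
  proof (cases "a < p+L")
    case True
    have "(?top @\<^sub>r ?H * ?Z) $$ (a,b) = ?top $$ (a,b)"
      using True b Z by (simp add: append_rows_eq_mat)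
    also have "\<dots> = (\<Sum>k<p+L. lead (p+L) (p+L) Hb $$ (a,k) * Z $$ (k,b))"
      by (rule index_mult_mat_sum[OF lead_carrier Z True b])
    also have "\<dots> = (Hb * Z) $$ (a,b)"
      unfolding split sum_lessThan_add_split using True by (simp add: lead_def)
    finally show ?thesis ..
  next
    case False
    have "(?top @\<^sub>r ?H * ?Z) $$ (a,b) = (?H * ?Z) $$ (a - (p+L), b)"
      using False a b Z by (simp add: append_rows_eq_mat)
    also have "\<dots> = (\<Sum>k<L. ?H $$ (a - (p+L),k) * row_range p L Z $$ (k,b))"
      by (rule index_mult_mat_sum[of _ L L _ c]) (use False a b Z in auto)
    also have "\<dots> = (\<Sum>k<L. Hb $$ (a,p+k) * Z $$ (p+k,b))"
      using False a b Z by (auto simp: row_range_def intro!: sum.cong)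
    finally show ?thesis using split zero[of a] False a by simp
  qed
qed (use Hb Z in auto)

lemma lead_eq_mult_Eblk:
  fixes W :: "'a::semiring_1 mat"
  assumes "W \<in> carrier_mat n (k*L)" "L \<le> k*L"
  shows "lead n L W = W * Eblk k L"
proof (rule eq_matI)
  fix a b assume "a < dim_row (W * Eblk k L)" "b < dim_col (W * Eblk k L)"
  then have a: "a < n" and b: "b < L" using assms by auto
  have "(W * Eblk k L) $$ (a,b) = (\<Sum>l<k*L. if l = b then W $$ (a,l) else 0)"
    by (subst index_mult_mat_sum[OF assms(1) Eblk_carrier a b], rule sum.cong) (auto simp: Eblk_def b)
  also have "\<dots> = W $$ (a,b)" using b assms(2) by (simp add: less_le_trans)
  finally show "lead n L W $$ (a,b) = (W * Eblk k L) $$ (a,b)" using a b by (simp add: lead_def)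
qed (use assms in auto)

lemma Eblk_Suc:
  assumes "1 \<le> j" shows "Eblk (j+1) L = Eblk j L @\<^sub>r (0\<^sub>m L L :: 'a::{zero,one} mat)"
proof -
  have "L \<le> j*L" using assms by simp
  then have "b < L \<Longrightarrow> b < j*L" for b by linarith
  then show ?thesis by (intro eq_matI) (auto simp: Eblk_def append_rows_eq_mat)
qed

lemma arnoldi_residual:
  fixes A :: "'a::comm_ring mat"
  assumes A: "A \<in> carrier_mat n n" and B: "B \<in> carrier_mat n L" and X0: "X0 \<in> carrier_mat n L"
    and Wk: "Wk \<in> carrier_mat n k" and W: "W \<in> carrier_mat n r"
    and H: "H \<in> carrier_mat r k" and E: "E \<in> carrier_mat r L" and Y: "Y \<in> carrier_mat k L"
    and arnoldi: "A * Wk = W * H" and initial: "B - A * X0 = W * E"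
  shows "B - A * (X0 + Wk * Y) = W * (E - H * Y)"
proof -
  have "A * (Wk * Y) = W * (H * Y)"
    using assoc_mult_mat[OF A Wk Y] assoc_mult_mat[OF W H Y] arnoldi by simp
  then have "B - A * (X0 + Wk * Y) = (B - A * X0) - W * (H * Y)"
    using mult_add_distrib_mat[OF A X0 mult_carrier_mat[OF Wk Y]] A B X0 W H Y
    by (intro eq_matI) (auto simp: diff_diff_add)
  also have "\<dots> = W * (E - H * Y)"
    unfolding initial by (rule mult_minus_distrib_mat[OF W E mult_carrier_mat[OF H Y], symmetric])
  finally show ?thesis .
qed

lemma full_column_rank_kernel:
  fixes F :: "complex mat"
  assumes F: "F \<in> carrier_mat n c" and rank: "vec_space.rank n F = c"
    and v: "v \<in> carrier_vec c" "F *\<^sub>v v = 0\<^sub>v n"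
  shows "v = 0\<^sub>v c"
proof (rule ccontr)
  assume nz: "v \<noteq> 0\<^sub>v c"
  interpret vec_space "TYPE(complex)" n .
  show False
  proof (cases "distinct (cols F)")
    case True
    then have "lin_indpt (set (cols F))" using full_rank_lin_indpt rank F by auto
    then show False using lin_depI[OF F v(1) nz v(2)] True by blast
  next
    case False
    obtain S where S: "maximal S (\<lambda>T. T \<subseteq> set (cols F) \<and> lin_indpt T)"
      using maximal_exists[of "\<lambda>T. T \<subseteq> set (cols F) \<and> lin_indpt T" "card (set (cols F))" "{}"]
      by (meson List.finite_set card_mono empty_iff empty_subsetI finite_lin_indpt2 rev_finite_subset)
    then have "card S \<le> card (set (cols F))" by (simp add: card_mono maximal_def)
    also have "\<dots> < c"
      using F False card_length card_distinct cols_length carrier_matD(2) nat_less_le by metis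
    finally show False using rank_card_indpt[OF F S] rank by simp
  qed
qed

lemma invertible_if_full_rank_factor:
  fixes F M C :: "complex mat"
  assumes M: "M \<in> carrier_mat n L" and C: "C \<in> carrier_mat L L"
    and rank: "vec_space.rank n (M * C) = L"
  shows "invertible_mat C"
proof -
  have "det C \<noteq> 0"
  proof
    assume "det C = 0"
    then obtain v where v: "v \<in> carrier_vec L" "v \<noteq> 0\<^sub>v L" "C *\<^sub>v v = 0\<^sub>v L"
      using det_0_iff_vec_prod_zero_field[OF C] by blast
    have "(M * C) *\<^sub>v v = 0\<^sub>v n"
      using assoc_mult_mat_vec[OF M C v(1)] v(3) M by auto
    then show False
      using full_column_rank_kernel[OF mult_carrier_mat[OF M C] rank v(1)] v(2) by simp
  qed
  from det_non_zero_imp_unit[OF C this, unfolded Units_def, of "()"]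
  obtain B where "B \<in> carrier_mat L L" "B * C = 1\<^sub>m L" "C * B = 1\<^sub>m L"
    by (auto simp: ring_mat_def)
  then show ?thesis using C unfolding invertible_mat_def inverts_mat_def square_mat.simps by auto
qed


section \<open>Unitary two-by-two block matrices\<close>

lemma four_block_mat_blk:
  assumes "Om \<in> carrier_mat (2*L) (2*L)"
  shows "Om = four_block_mat (blk Om 1 1 L) (blk Om 1 2 L) (blk Om 2 1 L) (blk Om 2 2 L)"
  by (rule eq_matI) (use assms in \<open>auto simp: four_block_mat_def blk_def\<close>)

lemma blk_carrier[simp]: "blk X i k L \<in> carrier_mat L L"
  by (simp add: blk_def)

lemma blk_dims[simp]: "dim_row (blk X i k L) = L" "dim_col (blk X i k L) = L"
  by (simp_all add: blk_def)

lemma unitary_block_row: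
  assumes U: "unitary (a+b) (four_block_mat Q11 Q12 Q21 Q22)"
    and Q: "Q11 \<in> carrier_mat a a" "Q12 \<in> carrier_mat a b" "Q21 \<in> carrier_mat b a" "Q22 \<in> carrier_mat b b"
  shows "Q11 * mat_adjoint Q11 + Q12 * mat_adjoint Q12 = 1\<^sub>m a"
proof -
  have "four_block_mat Q11 Q12 Q21 Q22 * mat_adjoint (four_block_mat Q11 Q12 Q21 Q22) = 1\<^sub>m (a+b)"
    by (rule unitary_mult_adjoint[OF U])
  then have "four_block_mat (Q11 * mat_adjoint Q11 + Q12 * mat_adjoint Q12) (Q11 * mat_adjoint Q21 + Q12 * mat_adjoint Q22)
      (Q21 * mat_adjoint Q11 + Q22 * mat_adjoint Q12) (Q21 * mat_adjoint Q21 + Q22 * mat_adjoint Q22) = 1\<^sub>m (a+b)"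
    unfolding mat_adjoint_four_block_mat[OF Q]
    using mult_four_block_mat[OF Q mat_adjoint_carrier[OF Q(1)] mat_adjoint_carrier[OF Q(3)]
        mat_adjoint_carrier[OF Q(2)] mat_adjoint_carrier[OF Q(4)]] by simp
  then have "lead a a (four_block_mat (Q11 * mat_adjoint Q11 + Q12 * mat_adjoint Q12) (Q11 * mat_adjoint Q21 + Q12 * mat_adjoint Q22)
      (Q21 * mat_adjoint Q11 + Q22 * mat_adjoint Q12) (Q21 * mat_adjoint Q21 + Q22 * mat_adjoint Q22)) = lead a a (1\<^sub>m (a+b))"
    by simp
  moreover have "lead a a (1\<^sub>m (a+b)) = (1\<^sub>m a :: complex mat)"
    by (rule eq_matI) (auto simp: lead_def)
  moreover have "lead a a (four_block_mat X Y Z T) = X" if "X \<in> carrier_mat a a" for X Y Z T :: "complex mat"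
    using that by (intro eq_matI) (auto simp: lead_def four_block_mat_def)
  ultimately show ?thesis using Q by auto
qed

lemma unitary_solve_zero_bottom:
  assumes U: "unitary (a+b) (four_block_mat Q11 Q12 Q21 Q22)"
    and Q: "Q11 \<in> carrier_mat a a" "Q12 \<in> carrier_mat a b" "Q21 \<in> carrier_mat b a" "Q22 \<in> carrier_mat b b"
    and X: "X1 \<in> carrier_mat a c" "X2 \<in> carrier_mat b c" and w: "w \<in> carrier_mat a c"
    and eq: "four_block_mat Q11 Q12 Q21 Q22 * (X1 @\<^sub>r X2) = w @\<^sub>r 0\<^sub>m b c"
  shows "X1 = mat_adjoint Q11 * w" "X2 = mat_adjoint Q12 * w"
proof -
  let ?Om = "four_block_mat Q11 Q12 Q21 Q22"
  have Omc: "?Om \<in> carrier_mat (a+b) (a+b)" using Q by auto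
  have X12: "X1 @\<^sub>r X2 \<in> carrier_mat (a+b) c" using X by auto
  have "mat_adjoint ?Om * (?Om * (X1 @\<^sub>r X2)) = mat_adjoint ?Om * ?Om * (X1 @\<^sub>r X2)"
    by (rule assoc_mult_mat[OF mat_adjoint_carrier[OF Omc] Omc X12, symmetric])
  then have "X1 @\<^sub>r X2 = mat_adjoint ?Om * (?Om * (X1 @\<^sub>r X2))"
    using unitary_adjoint_mult[OF U] left_mult_one_mat[OF X12] by simp
  also have "\<dots> = (mat_adjoint Q11 * w + mat_adjoint Q21 * 0\<^sub>m b c) @\<^sub>r (mat_adjoint Q12 * w + mat_adjoint Q22 * 0\<^sub>m b c)"
    unfolding eq mat_adjoint_four_block_mat[OF Q]
    by (rule four_block_mat_mult_append_rows) (use Q w in auto)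
  also have "\<dots> = mat_adjoint Q11 * w @\<^sub>r mat_adjoint Q12 * w"
  proof -
    have "mat_adjoint Q11 * w \<in> carrier_mat a c" "mat_adjoint Q12 * w \<in> carrier_mat b c"
      using Q w by auto
    then show ?thesis using Q w by simp
  qed
  finally have "X1 @\<^sub>r X2 = mat_adjoint Q11 * w @\<^sub>r mat_adjoint Q12 * w" .
  moreover have "mat_adjoint Q11 * w \<in> carrier_mat a c" "mat_adjoint Q12 * w \<in> carrier_mat b c"
    using Q w by auto
  ultimately show "X1 = mat_adjoint Q11 * w" "X2 = mat_adjoint Q12 * w"
    using append_rows_inj[OF X] by blast+
qed

text \<open>Both sides equal \<open>Q\<^sub>1\<^sub>2 Q\<^sub>1\<^sub>2\<^sup>* Q\<^sub>1\<^sub>1 C\<close>, because \<open>C M = Q\<^sub>1\<^sub>1\<^sup>* Q\<^sub>1\<^sub>1 C\<close>,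
  \<open>w C\<^sup>-\<^sup>1 Q\<^sub>1\<^sub>1\<^sup>* = I\<close> and \<open>I - Q\<^sub>1\<^sub>1 Q\<^sub>1\<^sub>1\<^sup>* = Q\<^sub>1\<^sub>2 Q\<^sub>1\<^sub>2\<^sup>*\<close>.\<close>

lemma cs_weight_balance:
  assumes c: "Q11 \<in> carrier_mat L L" "Q12 \<in> carrier_mat L L" "C \<in> carrier_mat L L" "w \<in> carrier_mat L L"
    and inv: "invertible_mat C"
    and C: "C = mat_adjoint Q11 * w" and h: "h = mat_adjoint Q12 * w"
    and row: "Q11 * mat_adjoint Q11 + Q12 * mat_adjoint Q12 = 1\<^sub>m L"
    and M: "M = minv C * mat_adjoint Q11 * Q11 * C"
  shows "Q11 * (C * (1\<^sub>m L - M)) = Q12 * (h * M)"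
proof -
  note Ci = minv_inverse[OF inv c(3)]
  have ac: "mat_adjoint Q11 \<in> carrier_mat L L" "mat_adjoint Q12 \<in> carrier_mat L L" using c by auto
  note assoc = assoc_mult_mat[of _ L L _ L _ L]
  have Mc: "M \<in> carrier_mat L L" unfolding M using c ac Ci by (simp add: mult_carrier_mat_square)
  have "mat_adjoint Q11 * (w * minv C) = 1\<^sub>m L"
    using assoc_mult_mat[OF ac(1) c(4) Ci(1)] C Ci(2) by simp
  then have wCi: "w * minv C * mat_adjoint Q11 = 1\<^sub>m L"
    by (rule mat_mult_left_right_inverse[OF ac(1) mult_carrier_mat[OF c(4) Ci(1)]])
  have "C * M = C * minv C * (mat_adjoint Q11 * Q11 * C)"
    using Ci(1) c ac unfolding M by (simp add: assoc mult_carrier_mat_square)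
  then have CM: "C * M = mat_adjoint Q11 * Q11 * C"
    using Ci(2) c ac by (simp add: assoc mult_carrier_mat_square)
  have X: "mat_adjoint Q11 * Q11 * C \<in> carrier_mat L L" using c ac by (meson mult_carrier_mat)
  have "C * (1\<^sub>m L - M) = C - mat_adjoint Q11 * Q11 * C"
    using mult_minus_distrib_mat[OF c(3) one_carrier_mat Mc] c(3) CM by simp
  then have "Q11 * (C * (1\<^sub>m L - M)) = Q11 * C - Q11 * (mat_adjoint Q11 * Q11 * C)"
    using mult_minus_distrib_mat[OF c(1) c(3) X] by simp
  also have "\<dots> = (1\<^sub>m L - Q11 * mat_adjoint Q11) * (Q11 * C)"
    using minus_mult_distrib_mat[OF one_carrier_mat mult_carrier_mat[OF c(1) ac(1)] mult_carrier_mat[OF c(1) c(3)]]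
      c ac by (simp add: assoc)
  also have "\<dots> = Q12 * mat_adjoint Q12 * (Q11 * C)"
    using eq_minus_if_add_mat_eq[OF mult_carrier_mat[OF c(1) ac(1)] mult_carrier_mat[OF c(2) ac(2)] row]
    by simp
  also have "\<dots> = Q12 * (mat_adjoint Q12 * (w * minv C * mat_adjoint Q11) * (Q11 * C))"
    using c ac by (simp add: wCi assoc mult_carrier_mat_square)
  also have "\<dots> = Q12 * (h * M)"
    unfolding h M using c ac Ci by (simp add: assoc mult_carrier_mat_square)
  finally show ?thesis .
qed

section \<open>The CS decomposition of the first block column\<close>

lemma diag_real_carrier[simp]: "diag_real L c \<in> carrier_mat L L"
  by (simp add: diag_real_def)

lemma mat_adjoint_diag_real[simp]: "mat_adjoint (diag_real L c) = diag_real L c"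
  by (rule eq_matI) (auto simp: diag_real_def)

lemma diag_real_mult: "diag_real L c * diag_real L d = diag_real L (\<lambda>i. c i * d i)"
proof (rule eq_matI)
  fix a b assume "a < dim_row (diag_real L (\<lambda>i. c i * d i))" "b < dim_col (diag_real L (\<lambda>i. c i * d i))"
  then have a: "a < L" and b: "b < L" by (auto simp: diag_real_def)
  have "(diag_real L c * diag_real L d) $$ (a,b)
      = (\<Sum>k<L. if k = a then (if a = b then complex_of_real (c a * d a) else 0) else 0)"
    by (subst index_mult_mat_sum[OF diag_real_carrier diag_real_carrier a b], rule sum.cong)
      (use a b in \<open>auto simp: diag_real_def\<close>)
  then show "(diag_real L c * diag_real L d) $$ (a,b) = diag_real L (\<lambda>i. c i * d i) $$ (a,b)"
    using a b by (simp add: diag_real_def)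
qed (auto simp: diag_real_def)

lemma diag_real_squares_sum:
  assumes "\<forall>i<L. (c i)\<^sup>2 + (s i)\<^sup>2 = 1"
  shows "diag_real L c * diag_real L c + diag_real L s * diag_real L s = 1\<^sub>m L"
proof -
  have "complex_of_real (c i * c i) + complex_of_real (s i * s i) = 1" if "i < L" for i
    using assms that by (metis of_real_1 of_real_add power2_eq_square)
  then show ?thesis unfolding diag_real_mult by (intro eq_matI) (auto simp: diag_real_def)
qed

lemma cs_gram:
  assumes U: "unitary L U" and V: "V \<in> carrier_mat L L"
    and Q: "Q = U * diag_real L c * mat_adjoint V"
  shows "mat_adjoint Q * Q = V * (diag_real L c * diag_real L c) * mat_adjoint V"
proof -
  have Uc: "U \<in> carrier_mat L L" using U by (rule unitary_carrier)
  note assoc = assoc_mult_mat[of _ L L _ L _ L]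
  have UU: "mat_adjoint U * (U * X) = X" if "X \<in> carrier_mat L L" for X
    using assoc[OF _ Uc that, of "mat_adjoint U"] unitary_adjoint_mult[OF U] Uc that by simp
  have "mat_adjoint Q = V * (diag_real L c * mat_adjoint U)"
    unfolding Q using Uc V
    by (simp add: mat_adjoint_mult[OF mult_carrier_mat[OF Uc diag_real_carrier] mat_adjoint_carrier[OF V]]
        mat_adjoint_mult[OF Uc diag_real_carrier])
  then show ?thesis
    unfolding Q using Uc V by (simp add: assoc UU mult_carrier_mat_square)
qed

lemma cs_similar_gram:
  assumes U: "unitary L U" and V: "V \<in> carrier_mat L L" and C: "C \<in> carrier_mat L L" "invertible_mat C"
    and Q: "Q = U * diag_real L c * mat_adjoint V"
  shows "minv C * V * (diag_real L c * diag_real L c) * mat_adjoint V * C = minv C * mat_adjoint Q * Q * C"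
proof -
  have "Q \<in> carrier_mat L L" unfolding Q using unitary_carrier[OF U] V by auto
  then show ?thesis
    using cs_gram[OF U V Q] minv_inverse[OF C(2,1)] V C(1)
    by (simp add: assoc_mult_mat[of _ L L _ L _ L] mult_carrier_mat_square)
qed

lemma cs_weights_sum:
  assumes V: "unitary L V" and C: "C \<in> carrier_mat L L" "invertible_mat C"
    and cs: "\<forall>i<L. (c i)\<^sup>2 + (s i)\<^sup>2 = 1"
  shows "minv C * V * (diag_real L c * diag_real L c) * mat_adjoint V * C
       + minv C * V * (diag_real L s * diag_real L s) * mat_adjoint V * C = 1\<^sub>m L" (is "?Mc + ?Ms = _")
    and "minv C * V * (diag_real L s * diag_real L s) * mat_adjoint V * C
       = 1\<^sub>m L - minv C * V * (diag_real L c * diag_real L c) * mat_adjoint V * C"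
proof -
  have Vc: "V \<in> carrier_mat L L" using V by (rule unitary_carrier)
  note Ci = minv_inverse[OF C(2,1)]
  note assoc = assoc_mult_mat[of _ L L _ L _ L]
  define Dc where "Dc = diag_real L c * diag_real L c"
  define Ds where "Ds = diag_real L s * diag_real L s"
  define R where "R = mat_adjoint V * C"
  have Dc: "Dc \<in> carrier_mat L L" and Ds: "Ds \<in> carrier_mat L L" and R: "R \<in> carrier_mat L L"
    unfolding Dc_def Ds_def R_def using Vc C by (auto simp: mult_carrier_mat_square)
  have "minv C * V * Dc * mat_adjoint V * C + minv C * V * Ds * mat_adjoint V * C
      = minv C * (V * (Dc * R)) + minv C * (V * (Ds * R))"
    unfolding R_def using Vc C Ci Dc Ds by (simp add: assoc mult_carrier_mat_square)
  also have "\<dots> = minv C * (V * ((Dc + Ds) * R))"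
    using Ci(1) Vc Dc Ds R
    by (simp add: add_mult_distrib_mat[OF Dc Ds R] mult_add_distrib_mat[of _ L L _ L] mult_carrier_mat_square)
  also have "\<dots> = minv C * (V * mat_adjoint V * C)"
    unfolding Dc_def Ds_def diag_real_squares_sum[OF cs] R_def using Vc C by (simp add: assoc)
  also have "\<dots> = 1\<^sub>m L"
    unfolding unitary_mult_adjoint[OF V] using C Ci by simp
  finally show sum: "?Mc + ?Ms = 1\<^sub>m L" unfolding Dc_def Ds_def .
  show "?Ms = 1\<^sub>m L - ?Mc"
    by (rule eq_minus_if_add_mat_eq[of _ L L, OF _ _ sum]) (use Vc C Ci in \<open>simp_all add: mult_carrier_mat_square\<close>)
qed

section \<open>One step of block GMRES\<close>

locale block_gmres_step =
  fixes n L j :: nat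
    and A B X0 S0 W Hb :: "complex mat"
    and Om :: "nat \<Rightarrow> complex mat"
  assumes L_pos: "L \<ge> 1" and j_ge_2: "j \<ge> 2"
    and A: "A \<in> carrier_mat n n" and B: "B \<in> carrier_mat n L" and X0: "X0 \<in> carrier_mat n L"
    and S0: "S0 \<in> carrier_mat L L"
    and W: "W \<in> carrier_mat n ((j+1)*L)" and Hb: "Hb \<in> carrier_mat ((j+1)*L) (j*L)"
    and initial_residual: "B - A * X0 = lead n L W * S0"
    and arnoldi: "A * lead n (j*L) W = W * Hb"
    and hessenberg: "\<forall>i k. 1 \<le> k \<and> k \<le> j \<and> k + 1 < i \<and> i \<le> j + 1 \<longrightarrow> blk Hb i k L = 0\<^sub>m L L"
    and Om_unitary: "\<forall>i. 1 \<le> i \<and> i \<le> j \<longrightarrow> unitary (2*L) (Om i)"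
    and Qbar_triangularizes: "\<forall>k. 1 \<le> k \<and> k \<le> j \<longrightarrow> (\<exists>R. R \<in> carrier_mat (k*L) (k*L) \<and>
            invertible_mat R \<and> Qbar Om k L * lead ((k+1)*L) (k*L) Hb = stack_zero R L)"
    and Hj_invertible: "invertible_mat (lead (j*L) (j*L) Hb)"
begin

definition p :: nat where "p = (j - 1) * L"

definition Qprev :: "complex mat" where "Qprev = Qbar Om (j - 1) L"

abbreviation Yprev :: "complex mat" where "Yprev \<equiv> gmres_Y Hb S0 (j - 1) L"

abbreviation Q11 :: "complex mat" where "Q11 \<equiv> blk (Om j) 1 1 L"

abbreviation Q12 :: "complex mat" where "Q12 \<equiv> blk (Om j) 1 2 L"

abbreviation Hsub :: "complex mat" where "Hsub \<equiv> blk Hb (j+1) j L"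

definition rhs :: "complex mat" where "rhs = Eblk j L * S0"

definition Ct :: "complex mat" where "Ct = row_range p L (Qprev * rhs)"

definition Yfom :: "complex mat" where "Yfom = minv (lead (p+L) (p+L) Hb) * rhs"

definition fom_weight :: "complex mat" where "fom_weight = minv Ct * mat_adjoint Q11 * Q11 * Ct"

lemma block_dims: "j*L = p + L" "(j+1)*L = p + L + L" "(j - 1 + 1) * L = p + L" "Suc (j - 1) = j" "(j - 1) * L = p"
  "j - 1 + 1 = j"
  using j_ge_2 unfolding p_def by (auto simp: algebra_simps)

lemma Hb_carrier: "Hb \<in> carrier_mat (p+L+L) (p+L)"
  using Hb by (simp only: block_dims)

lemma rhs_carrier: "rhs \<in> carrier_mat (p+L) L"
  using mult_carrier_mat[OF Eblk_carrier[of j L] S0] unfolding rhs_def block_dims(1) .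

lemma Om_j_unitary: "unitary (2*L) (Om j)"
  using Om_unitary j_ge_2 by simp

lemma Om_j_blocks: "Om j = four_block_mat Q11 Q12 (blk (Om j) 2 1 L) (blk (Om j) 2 2 L)"
  by (rule four_block_mat_blk[OF unitary_carrier[OF Om_j_unitary]])

lemma Qprev_unitary: "unitary (p+L) Qprev"
  using Qbar_unitary[OF Om_unitary, of "j - 1"] unfolding Qprev_def by (simp only: block_dims)

lemma Qbar_j_unitary: "unitary (p+L+L) (Qbar Om j L)"
  using Qbar_unitary[OF Om_unitary, of j] by (simp only: block_dims)

lemma Ct_carrier: "Ct \<in> carrier_mat L L"
  unfolding Ct_def using row_range_carrier[of p L "Qprev * rhs"] rhs_carrier by simp

lemma Ct_eq: "Ct = row_range ((j-1)*L) L (Qbar Om (j-1) L * Eblk j L * S0)"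
  unfolding Ct_def Qprev_def rhs_def block_dims(5)
  using assoc_mult_mat[OF unitary_carrier[OF Qprev_unitary, unfolded Qprev_def]
      Eblk_carrier[of j L, unfolded block_dims(1)] S0] by simp

lemma Qbar_j_mult_append_rows:
  assumes X: "X \<in> carrier_mat (p+L) c" and Z: "Z \<in> carrier_mat L c"
  shows "Qbar Om j L * (X @\<^sub>r Z) = row_range 0 p (Qprev * X) @\<^sub>r Om j * (row_range p L (Qprev * X) @\<^sub>r Z)"
proof -
  have Omc: "Om j \<in> carrier_mat (L+L) (L+L)" using unitary_carrier[OF Om_j_unitary] by (simp add: mult_2)
  have Qc: "Qprev \<in> carrier_mat (p+L) (p+L)" using unitary_carrier[OF Qprev_unitary] .
  define T where "T = four_block_mat (1\<^sub>m p) (0\<^sub>m p (L+L)) (0\<^sub>m (L+L) p) (Om j)"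
  define P where "P = four_block_mat Qprev (0\<^sub>m (p+L) L) (0\<^sub>m L (p+L)) (1\<^sub>m L)"
  have "Qbar Om j L = T * P"
    using Qbar_Suc[of Om "j - 1" L, unfolded block_dims(4), OF unitary_carrier[OF Om_j_unitary]]
    unfolding T_def P_def Qprev_def block_dims(3,5) mult_2 .
  moreover have "T \<in> carrier_mat (p+L+L) (p+L+L)" "P \<in> carrier_mat (p+L+L) (p+L+L)"
    unfolding T_def P_def using Omc Qc by (auto simp: add.assoc)
  ultimately have "Qbar Om j L * (X @\<^sub>r Z) = T * (P * (X @\<^sub>r Z))"
    using X Z by (simp add: assoc_mult_mat[of T "p+L+L" "p+L+L" P "p+L+L" "X @\<^sub>r Z" c])
  also have "P * (X @\<^sub>r Z) = (row_range 0 p (Qprev * X) @\<^sub>r row_range p L (Qprev * X)) @\<^sub>r Z"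
    unfolding P_def block_diag_mult_append_rows[OF Qc one_carrier_mat X Z] using Z
    by (simp only: append_rows_row_range[OF mult_carrier_mat[OF Qc X]] left_mult_one_mat)
  also have "\<dots> = row_range 0 p (Qprev * X) @\<^sub>r row_range p L (Qprev * X) @\<^sub>r Z"
    by (rule append_rows_assoc) (use Qc X Z in auto)
  also have "T * \<dots> = row_range 0 p (Qprev * X) @\<^sub>r Om j * (row_range p L (Qprev * X) @\<^sub>r Z)"
  proof -
    have "row_range 0 p (Qprev * X) \<in> carrier_mat p c" "row_range p L (Qprev * X) @\<^sub>r Z \<in> carrier_mat (L+L) c"
      using row_range_carrier[of 0 p "Qprev * X"] row_range_carrier[of p L "Qprev * X"] Qc X Z by auto
    then show ?thesis
      unfolding T_def using block_diag_mult_append_rows[OF one_carrier_mat Omc] by simp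
  qed
  finally show ?thesis .
qed

lemma Hb_mult:
  assumes Z: "Z \<in> carrier_mat (p+L) c"
  shows "Hb * Z = lead (p+L) (p+L) Hb * Z @\<^sub>r blk Hb (j+1) j L * row_range p L Z"
proof -
  have "Hb $$ (a,k) = 0" if a: "p+L \<le> a" "a < p+L+L" and k: "k < p" for a k
  proof -
    have "k div L < j - 1" using k L_pos unfolding p_def by (simp add: less_mult_imp_div_less)
    then have "blk Hb (j+1) (k div L + 1) L = 0\<^sub>m L L"
      using hessenberg[rule_format, of "k div L + 1" "j+1"] by (simp add: less_diff_conv)
    then have "blk Hb (j+1) (k div L + 1) L $$ (a - (p+L), k mod L) = 0" using a L_pos by simp
    moreover have "j * L + (a - (p+L)) = a" "(k div L) * L + k mod L = k" using a block_dims(1) by simp_all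
    ultimately show ?thesis using a L_pos by (simp add: blk_def)
  qed
  moreover have "blk Hb (j+1) j L = mat L L (\<lambda>(a,b). Hb $$ (p+L+a, p+b))"
    unfolding blk_def by (simp only: add_diff_cancel_right' block_dims(1,5))
  ultimately show ?thesis using hessenberg_mult[OF Hb_carrier Z] by simp
qed

lemma gmres_prev_residual:
  "Yprev \<in> carrier_mat p L \<and> Qprev * (lead (p+L) p Hb * Yprev - rhs) = 0\<^sub>m p L @\<^sub>r - Ct"
proof -
  have Qc: "Qprev \<in> carrier_mat (p+L) (p+L)" and Qa: "mat_adjoint Qprev * Qprev = 1\<^sub>m (p+L)"
    using Qprev_unitary unfolding unitary_def by auto
  have "1 \<le> j - 1 \<and> j - 1 \<le> j" using j_ge_2 by simp
  from Qbar_triangularizes[rule_format, OF this] obtain R where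
    R: "R \<in> carrier_mat p p" "invertible_mat R" "Qprev * lead (p+L) p Hb = stack_zero R L"
    unfolding Qprev_def block_dims(3,5) by blast
  define G where "G = row_range 0 p (Qprev * rhs)"
  define Y where "Y = minv R * G"
  have Gc: "G \<in> carrier_mat p L" unfolding G_def using row_range_carrier[of 0 p "Qprev * rhs"] rhs_carrier by simp
  have Yc: "Y \<in> carrier_mat p L" unfolding Y_def using minv_inverse[OF R(2,1)] Gc by auto
  have RY: "R * Y = G" unfolding Y_def using minv_inverse[OF R(2,1)] R(1) Gc
    by (simp add: assoc_mult_mat[symmetric, of R p p _ p G L])
  have QE: "Qprev * rhs = G @\<^sub>r Ct"
    unfolding G_def Ct_def using append_rows_row_range[of "Qprev * rhs" p L L] Qc rhs_carrier by simp
  have "Qprev * (lead (p+L) p Hb * Y - rhs) = Qprev * lead (p+L) p Hb * Y - Qprev * rhs"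
    using Qc Yc rhs_carrier
    by (simp add: mult_minus_distrib_mat[OF Qc mult_carrier_mat[OF lead_carrier Yc] rhs_carrier]
        assoc_mult_mat[OF Qc lead_carrier Yc])
  also have "\<dots> = (G @\<^sub>r 0\<^sub>m L L) - (G @\<^sub>r Ct)"
    unfolding R(3) stack_zero_eq_append_rows QE using append_rows_mult[OF R(1) zero_carrier_mat Yc] R(1) Yc RY
    by simp
  also have "\<dots> = 0\<^sub>m p L @\<^sub>r - Ct"
    using Gc Ct_carrier by (subst append_rows_minus[of _ p L _ L]) (auto intro!: arg_cong2[where f=append_rows])
  finally have res: "Qprev * (lead (p+L) p Hb * Y - rhs) = 0\<^sub>m p L @\<^sub>r - Ct" .
  have "gmres_Y Hb S0 (j - 1) L = Y"
  proof (rule gmres_Y_eqI[of Qprev _ _ R])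
    show "row_range 0 ((j - 1) * L) (Qprev * (lead ((j - 1 + 1) * L) ((j - 1) * L) Hb * Y - Eblk (j - 1 + 1) L * S0))
        = 0\<^sub>m ((j - 1) * L) L"
      using res Ct_carrier unfolding Qprev_def block_dims(6) block_dims(1,5) rhs_def
      by (simp add: row_range_append_rows_top[OF zero_carrier_mat uminus_carrier_mat[OF Ct_carrier]])
  qed (use Qc Qa R Yc S0 in \<open>simp_all only: Qprev_def block_dims(3,5)\<close>)
  then show ?thesis using Yc res by simp
qed

lemma Eblk_next_rhs: "Eblk (j+1) L * S0 = rhs @\<^sub>r 0\<^sub>m L L"
proof -
  have E: "Eblk (j+1) L = Eblk j L @\<^sub>r 0\<^sub>m L L"
    by (rule Eblk_Suc) (use j_ge_2 in simp)
  show ?thesis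
    unfolding rhs_def E using append_rows_mult[OF Eblk_carrier[of j L] zero_carrier_mat[of L L] S0] S0 by simp
qed

lemma step_residual:
  assumes Y: "Y \<in> carrier_mat (p+L) L"
  shows "B - A * (X0 + lead n (p+L) W * Y) = W * ((rhs @\<^sub>r 0\<^sub>m L L) - Hb * Y)"
proof (rule arnoldi_residual[OF A B X0 lead_carrier _ Hb_carrier _ Y])
  show "W \<in> carrier_mat n (p+L+L)" using W unfolding block_dims(2) .
  show "rhs @\<^sub>r 0\<^sub>m L L \<in> carrier_mat (p+L+L) L" using rhs_carrier by auto
  show "A * lead n (p+L) W = W * Hb" using arnoldi unfolding block_dims(1) .
  have "lead n L W = W * Eblk (j+1) L"
    by (rule lead_eq_mult_Eblk[OF W]) simp
  then have "lead n L W * S0 = W * (rhs @\<^sub>r 0\<^sub>m L L)"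
    using assoc_mult_mat[OF W Eblk_carrier S0] Eblk_next_rhs by simp
  then show "B - A * X0 = W * (rhs @\<^sub>r 0\<^sub>m L L)" using initial_residual by simp
qed

lemma gmres_X_prev: "gmres_X X0 W Hb S0 (j - 1) L = X0 + lead n (p+L) W * stack_zero Yprev L"
proof -
  have Yc: "Yprev \<in> carrier_mat p L" using gmres_prev_residual by blast
  show ?thesis
    unfolding gmres_X_def block_dims(5) using lead_mult_stack_zero[OF Yc, where r=n and X=W and L=L] W by simp
qed

lemma Hb_mult_stack_zero: "Hb * stack_zero Yprev L = lead (p+L) p Hb * Yprev @\<^sub>r 0\<^sub>m L L"
proof -
  have Yc: "Yprev \<in> carrier_mat p L" using gmres_prev_residual by blast
  then have SZc: "stack_zero Yprev L \<in> carrier_mat (p+L) L" by (simp add: stack_zero_def)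
  show ?thesis
    unfolding Hb_mult[OF SZc] lead_mult_stack_zero[OF Yc] row_range_stack_zero[OF Yc]
    using right_mult_zero_mat[OF blk_carrier[of Hb "Suc j" j L]] by simp
qed

lemma Ct_invertible:
  assumes rank: "vec_space.rank n (B - A * gmres_X X0 W Hb S0 (j - 1) L) = L"
  shows "invertible_mat Ct"
proof -
  have Yc: "Yprev \<in> carrier_mat p L" and res: "Qprev * (lead (p+L) p Hb * Yprev - rhs) = 0\<^sub>m p L @\<^sub>r - Ct"
    using gmres_prev_residual by blast+
  have Qc: "Qprev \<in> carrier_mat (p+L) (p+L)" and Qa: "mat_adjoint Qprev * Qprev = 1\<^sub>m (p+L)"
    using Qprev_unitary unfolding unitary_def by auto
  define K where "K = lead (p+L) p Hb * Yprev - rhs"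
  have Kc: "K \<in> carrier_mat (p+L) L" unfolding K_def using Yc rhs_carrier by auto
  have SZc: "stack_zero Yprev L \<in> carrier_mat (p+L) L" using Yc by (simp add: stack_zero_def)
  have Wc: "W \<in> carrier_mat n (p+L+L)" using W unfolding block_dims(2) .
  define N where "N = mat_adjoint Qprev * (0\<^sub>m p L @\<^sub>r 1\<^sub>m L) @\<^sub>r 0\<^sub>m L L"
  have Nc: "N \<in> carrier_mat (p+L+L) L" unfolding N_def using Qc by auto
  have "0\<^sub>m p L @\<^sub>r - Ct = - (0\<^sub>m p L @\<^sub>r Ct)"
    using Ct_carrier by (intro eq_matI) (auto simp: append_rows_eq_mat)
  then have QK: "Qprev * K = - (0\<^sub>m p L @\<^sub>r Ct)" unfolding K_def res .
  have "K = mat_adjoint Qprev * (Qprev * K)"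
    using assoc_mult_mat[OF mat_adjoint_carrier[OF Qc] Qc Kc] Qa Kc by simp
  then have "- K = mat_adjoint Qprev * (0\<^sub>m p L @\<^sub>r Ct)"
    unfolding QK using Qc Ct_carrier by simp
  also have "0\<^sub>m p L @\<^sub>r Ct = (0\<^sub>m p L @\<^sub>r 1\<^sub>m L) * Ct"
    using append_rows_mult[OF zero_carrier_mat one_carrier_mat Ct_carrier] Ct_carrier by simp
  finally have "- K @\<^sub>r 0\<^sub>m L L = N * Ct"
    unfolding N_def
    using append_rows_mult[OF mult_carrier_mat[OF mat_adjoint_carrier[OF Qc] carrier_append_rows[OF zero_carrier_mat
        one_carrier_mat]] zero_carrier_mat Ct_carrier] Qc Ct_carrier
    by (simp add: assoc_mult_mat[OF mat_adjoint_carrier[OF Qc] _ Ct_carrier])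
  moreover have "B - A * gmres_X X0 W Hb S0 (j - 1) L = W * (- K @\<^sub>r 0\<^sub>m L L)"
  proof -
    have "(rhs @\<^sub>r 0\<^sub>m L L) - (lead (p+L) p Hb * Yprev @\<^sub>r 0\<^sub>m L L) = - K @\<^sub>r 0\<^sub>m L L"
      unfolding K_def using rhs_carrier Yc by (intro eq_matI) (auto simp: append_rows_eq_mat)
    then show ?thesis unfolding gmres_X_prev step_residual[OF SZc] Hb_mult_stack_zero by simp
  qed
  ultimately have "B - A * gmres_X X0 W Hb S0 (j - 1) L = (W * N) * Ct"
    using assoc_mult_mat[OF Wc Nc Ct_carrier] by simp
  then show ?thesis
    using invertible_if_full_rank_factor[OF mult_carrier_mat[OF Wc Nc] Ct_carrier] rank by simp
qed

lemma Yfom_carrier: "Yfom \<in> carrier_mat (p+L) L"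
  using minv_inverse[OF Hj_invertible[unfolded block_dims(1)] lead_carrier] rhs_carrier unfolding Yfom_def by auto

lemma Hb_mult_Yfom: "Hb * Yfom = rhs @\<^sub>r Hsub * row_range p L Yfom"
proof -
  note Hi = minv_inverse[OF Hj_invertible[unfolded block_dims(1)] lead_carrier]
  have "lead (p+L) (p+L) Hb * Yfom = rhs"
    unfolding Yfom_def using assoc_mult_mat[OF lead_carrier[of "p+L" "p+L" Hb] Hi(1) rhs_carrier] Hi(2) rhs_carrier
    by simp
  then show ?thesis using Hb_mult[OF Yfom_carrier] by simp
qed

lemma Qbar_j_triangular:
  obtains R where "R \<in> carrier_mat (p+L) (p+L)" "invertible_mat R" "Qbar Om j L * Hb = stack_zero R L"
proof -
  have "1 \<le> j \<and> j \<le> j" using j_ge_2 by simp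
  from Qbar_triangularizes[rule_format, OF this] show ?thesis
    using that lead_full[OF Hb] unfolding block_dims(1,2) by auto
qed

lemma Om_j_unitary_blocks: "unitary (L+L) (four_block_mat Q11 Q12 (blk (Om j) 2 1 L) (blk (Om j) 2 2 L))"
  using Om_j_unitary unfolding mult_2 by (subst (asm) Om_j_blocks)

text \<open>Comparing the two sides of \<open>Qbar\<^sub>j (Hbar\<^sub>j Y\<^sup>F) = [R\<^sub>j Y\<^sup>F; 0]\<close> shows that \<open>\<Omega>\<^sub>j\<close>
  maps \<open>[C\<^sub>j; H\<^sub>j\<^sub>+\<^sub>1\<^sub>,\<^sub>j y]\<close> to \<open>[w; 0]\<close>.\<close>

lemma fom_last_block:
  obtains w where "w \<in> carrier_mat L L" "Ct = mat_adjoint Q11 * w"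
    "Hsub * row_range p L Yfom = mat_adjoint Q12 * w"
proof -
  obtain R where R: "R \<in> carrier_mat (p+L) (p+L)" "invertible_mat R" "Qbar Om j L * Hb = stack_zero R L"
    by (rule Qbar_j_triangular)
  define h where "h = Hsub * row_range p L Yfom"
  have hc: "h \<in> carrier_mat L L"
    unfolding h_def using mult_carrier_mat[OF blk_carrier[of Hb "j+1" j L] row_range_carrier[of p L Yfom]]
      Yfom_carrier by simp
  have Qc: "Qprev \<in> carrier_mat (p+L) (p+L)" using unitary_carrier[OF Qprev_unitary] .
  have Omc: "Om j \<in> carrier_mat (L+L) (L+L)" using unitary_carrier[OF Om_j_unitary] by (simp add: mult_2)
  define w where "w = row_range 0 L (Om j * (Ct @\<^sub>r h))"
  define z where "z = row_range L L (Om j * (Ct @\<^sub>r h))"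
  have wc: "w \<in> carrier_mat L L" and zc: "z \<in> carrier_mat L L"
    unfolding w_def z_def using Omc Ct_carrier hc by auto
  have Om_wz: "Om j * (Ct @\<^sub>r h) = w @\<^sub>r z"
    unfolding w_def z_def using append_rows_row_range[of "Om j * (Ct @\<^sub>r h)" L L L] Omc Ct_carrier hc by simp
  have Gc: "row_range 0 p (Qprev * rhs) \<in> carrier_mat p L"
    using row_range_carrier[of 0 p "Qprev * rhs"] Qc rhs_carrier by simp
  have "Qbar Om j L * (Hb * Yfom) = (R * Yfom) @\<^sub>r 0\<^sub>m L L"
    using assoc_mult_mat[OF unitary_carrier[OF Qbar_j_unitary] Hb_carrier Yfom_carrier] R Yfom_carrier
      append_rows_mult[OF R(1) zero_carrier_mat Yfom_carrier]
    by (simp add: stack_zero_eq_append_rows)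
  moreover have "Qbar Om j L * (Hb * Yfom) = (row_range 0 p (Qprev * rhs) @\<^sub>r w) @\<^sub>r z"
    unfolding Hb_mult_Yfom Qbar_j_mult_append_rows[OF rhs_carrier hc] Ct_def[symmetric]
      h_def[symmetric] Om_wz using append_rows_assoc[OF Gc wc zc] by simp
  ultimately have "R * Yfom @\<^sub>r 0\<^sub>m L L = (row_range 0 p (Qprev * rhs) @\<^sub>r w) @\<^sub>r z" by simp
  then have "0\<^sub>m L L = z"
    by (rule append_rows_inj(2)[OF mult_carrier_mat[OF R(1) Yfom_carrier] zero_carrier_mat
        carrier_append_rows[OF Gc wc] zc])
  then have "four_block_mat Q11 Q12 (blk (Om j) 2 1 L) (blk (Om j) 2 2 L) * (Ct @\<^sub>r h) = w @\<^sub>r 0\<^sub>m L L"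
    using Om_wz Om_j_blocks by simp
  from unitary_solve_zero_bottom[OF Om_j_unitary_blocks blk_carrier blk_carrier blk_carrier blk_carrier
      Ct_carrier hc wc this]
  show ?thesis using that wc unfolding h_def by blast
qed

lemma candidate_residual:
  assumes M: "M \<in> carrier_mat L L"
  shows "Hb * (Yfom * M + stack_zero Yprev L * (1\<^sub>m L - M)) - (rhs @\<^sub>r 0\<^sub>m L L)
    = (lead (p+L) p Hb * Yprev - rhs) * (1\<^sub>m L - M) @\<^sub>r Hsub * row_range p L Yfom * M"
proof -
  have Yc: "Yprev \<in> carrier_mat p L" using gmres_prev_residual by blast
  define h where "h = Hsub * row_range p L Yfom"
  define HY where "HY = lead (p+L) p Hb * Yprev"
  have hc: "h \<in> carrier_mat L L"
    unfolding h_def using mult_carrier_mat[OF blk_carrier[of Hb "j+1" j L] row_range_carrier[of p L Yfom]]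
      Yfom_carrier by simp
  have HYc: "HY \<in> carrier_mat (p+L) L" unfolding HY_def using Yc by auto
  have SZc: "stack_zero Yprev L \<in> carrier_mat (p+L) L" using Yc by (simp add: stack_zero_def)
  have M'c: "1\<^sub>m L - M \<in> carrier_mat L L" using M by auto
  have "Hb * (Yfom * M + stack_zero Yprev L * (1\<^sub>m L - M))
      = (rhs @\<^sub>r h) * M + (HY @\<^sub>r 0\<^sub>m L L) * (1\<^sub>m L - M)"
    using mult_add_distrib_mat[OF Hb_carrier mult_carrier_mat[OF Yfom_carrier M] mult_carrier_mat[OF SZc M'c]]
      assoc_mult_mat[OF Hb_carrier Yfom_carrier M] assoc_mult_mat[OF Hb_carrier SZc M'c]
    unfolding Hb_mult_Yfom Hb_mult_stack_zero h_def HY_def by simp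
  also have "\<dots> = (rhs * M + HY * (1\<^sub>m L - M)) @\<^sub>r h * M"
    using append_rows_mult[OF rhs_carrier hc M] append_rows_mult[OF HYc zero_carrier_mat M'c]
      append_rows_add[OF mult_carrier_mat[OF rhs_carrier M] mult_carrier_mat[OF hc M]
        mult_carrier_mat[OF HYc M'c] zero_carrier_mat] M hc by simp
  finally have "Hb * (Yfom * M + stack_zero Yprev L * (1\<^sub>m L - M)) - (rhs @\<^sub>r 0\<^sub>m L L)
      = (rhs * M + HY * (1\<^sub>m L - M) - rhs) @\<^sub>r h * M"
    using append_rows_minus[OF _ mult_carrier_mat[OF hc M] rhs_carrier zero_carrier_mat] rhs_carrier HYc M M'c
      minus_zero_mat[OF mult_carrier_mat[OF hc M]] by simp
  also have "rhs * M + HY * (1\<^sub>m L - M) - rhs = (HY - rhs) * (1\<^sub>m L - M)"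
    using mult_minus_distrib_mat[OF rhs_carrier one_carrier_mat M] minus_mult_distrib_mat[OF HYc rhs_carrier M'c]
      rhs_carrier HYc M by (intro eq_matI) auto
  finally show ?thesis unfolding h_def HY_def .
qed

lemma candidate_rotated_residual:
  assumes M: "M \<in> carrier_mat L L"
  shows "Qbar Om j L * (Hb * (Yfom * M + stack_zero Yprev L * (1\<^sub>m L - M)) - (rhs @\<^sub>r 0\<^sub>m L L))
    = 0\<^sub>m p L @\<^sub>r Om j * (- (Ct * (1\<^sub>m L - M)) @\<^sub>r Hsub * row_range p L Yfom * M)"
proof -
  have Yc: "Yprev \<in> carrier_mat p L" and res: "Qprev * (lead (p+L) p Hb * Yprev - rhs) = 0\<^sub>m p L @\<^sub>r - Ct"
    using gmres_prev_residual by blast+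
  define K where "K = lead (p+L) p Hb * Yprev - rhs"
  have Kc: "K \<in> carrier_mat (p+L) L" unfolding K_def using Yc rhs_carrier by auto
  have M'c: "1\<^sub>m L - M \<in> carrier_mat L L" using M by auto
  have hMc: "Hsub * row_range p L Yfom * M \<in> carrier_mat L L"
    using mult_carrier_mat[OF blk_carrier[of Hb "j+1" j L] row_range_carrier[of p L Yfom]] Yfom_carrier M by simp
  have Qc: "Qprev \<in> carrier_mat (p+L) (p+L)" using unitary_carrier[OF Qprev_unitary] .
  have "Qprev * (K * (1\<^sub>m L - M)) = (0\<^sub>m p L @\<^sub>r - Ct) * (1\<^sub>m L - M)"
    using assoc_mult_mat[OF Qc Kc M'c] res unfolding K_def by simp
  also have "\<dots> = 0\<^sub>m p L @\<^sub>r - (Ct * (1\<^sub>m L - M))"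
  proof -
    have "- Ct * (1\<^sub>m L - M) = - (Ct * (1\<^sub>m L - M))"
      by (rule uminus_mult_left_mat) (use Ct_carrier M in simp)
    then show ?thesis
      using append_rows_mult[OF zero_carrier_mat[of p L] uminus_carrier_mat[OF Ct_carrier] M'c]
        left_mult_zero_mat[OF M'c] by simp
  qed
  finally have QK: "Qprev * (K * (1\<^sub>m L - M)) = 0\<^sub>m p L @\<^sub>r - (Ct * (1\<^sub>m L - M))" .
  have CM'c: "- (Ct * (1\<^sub>m L - M)) \<in> carrier_mat L L" using Ct_carrier M'c by auto
  show ?thesis
    unfolding candidate_residual[OF M] K_def[symmetric] Qbar_j_mult_append_rows[OF mult_carrier_mat[OF Kc M'c] hMc] QK
    using row_range_append_rows_top[OF zero_carrier_mat CM'c] row_range_append_rows_bottom[OF zero_carrier_mat CM'c]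
    by simp
qed

lemma fom_weight_carrier: "invertible_mat Ct \<Longrightarrow> fom_weight \<in> carrier_mat L L"
  unfolding fom_weight_def using minv_inverse[of Ct L] Ct_carrier by (simp add: mult_carrier_mat_square)

lemma rotation_annihilates_top:
  assumes inv: "invertible_mat Ct"
  obtains z where "z \<in> carrier_mat L L"
    "Om j * (- (Ct * (1\<^sub>m L - fom_weight)) @\<^sub>r Hsub * row_range p L Yfom * fom_weight) = 0\<^sub>m L L @\<^sub>r z"
proof -
  obtain w where w: "w \<in> carrier_mat L L" "Ct = mat_adjoint Q11 * w"
    "Hsub * row_range p L Yfom = mat_adjoint Q12 * w"
    by (rule fom_last_block)
  define M where "M = fom_weight"
  define h where "h = Hsub * row_range p L Yfom"
  have Mc: "M \<in> carrier_mat L L" unfolding M_def by (rule fom_weight_carrier[OF inv])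
  have hc: "h \<in> carrier_mat L L"
    unfolding h_def using mult_carrier_mat[OF blk_carrier[of Hb "j+1" j L] row_range_carrier[of p L Yfom]]
      Yfom_carrier by simp
  have CM'c: "Ct * (1\<^sub>m L - M) \<in> carrier_mat L L" using Ct_carrier Mc by auto
  have "Q11 * (Ct * (1\<^sub>m L - M)) = Q12 * (h * M)"
    by (rule cs_weight_balance[OF blk_carrier blk_carrier Ct_carrier w(1) inv w(2) w(3)[folded h_def]
        unitary_block_row[OF Om_j_unitary_blocks blk_carrier blk_carrier blk_carrier blk_carrier]
        M_def[unfolded fom_weight_def]])
  moreover have "Q11 * - (Ct * (1\<^sub>m L - M)) = - (Q11 * (Ct * (1\<^sub>m L - M)))"
    by (rule uminus_mult_right_mat) (use Ct_carrier blk_carrier[of "Om j" 1 1 L] in simp)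
  ultimately have "Q11 * - (Ct * (1\<^sub>m L - M)) + Q12 * (h * M) = 0\<^sub>m L L"
    using uminus_l_inv_mat[OF mult_carrier_mat[OF blk_carrier[of "Om j" 1 2 L] mult_carrier_mat[OF hc Mc]]]
    by simp
  then have "Om j * (- (Ct * (1\<^sub>m L - M)) @\<^sub>r h * M)
      = 0\<^sub>m L L @\<^sub>r (blk (Om j) 2 1 L * - (Ct * (1\<^sub>m L - M)) + blk (Om j) 2 2 L * (h * M))"
    using four_block_mat_mult_append_rows[OF blk_carrier[of "Om j" 1 1 L] blk_carrier[of "Om j" 1 2 L]
        blk_carrier[of "Om j" 2 1 L] blk_carrier[of "Om j" 2 2 L] uminus_carrier_mat[OF CM'c]
        mult_carrier_mat[OF hc Mc], folded Om_j_blocks]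
    by simp
  moreover have "blk (Om j) 2 1 L * - (Ct * (1\<^sub>m L - M)) + blk (Om j) 2 2 L * (h * M) \<in> carrier_mat L L"
    using CM'c hc Mc by auto
  ultimately show ?thesis using that unfolding M_def h_def by blast
qed

lemma gmres_next:
  assumes inv: "invertible_mat Ct"
  shows "gmres_Y Hb S0 j L = Yfom * fom_weight + stack_zero Yprev L * (1\<^sub>m L - fom_weight)"
proof -
  obtain R where R: "R \<in> carrier_mat (p+L) (p+L)" "invertible_mat R" "Qbar Om j L * Hb = stack_zero R L"
    by (rule Qbar_j_triangular)
  obtain z where z: "z \<in> carrier_mat L L"
    "Om j * (- (Ct * (1\<^sub>m L - fom_weight)) @\<^sub>r Hsub * row_range p L Yfom * fom_weight) = 0\<^sub>m L L @\<^sub>r z"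
    by (rule rotation_annihilates_top[OF inv])
  have Mc: "fom_weight \<in> carrier_mat L L" by (rule fom_weight_carrier[OF inv])
  have Yc: "Yprev \<in> carrier_mat p L" using gmres_prev_residual by blast
  have top: "row_range 0 (p+L) (Qbar Om j L * (Hb * (Yfom * fom_weight + stack_zero Yprev L * (1\<^sub>m L - fom_weight))
      - (rhs @\<^sub>r 0\<^sub>m L L))) = 0\<^sub>m (p+L) L"
    unfolding candidate_rotated_residual[OF Mc] z(2)
      append_rows_assoc[OF zero_carrier_mat zero_carrier_mat z(1), symmetric] append_rows_zero[symmetric]
    by (rule row_range_append_rows_top[OF zero_carrier_mat z(1)])
  show ?thesis
  proof (rule gmres_Y_eqI[of "Qbar Om j L" j L R])
    show "Qbar Om j L \<in> carrier_mat ((j+1)*L) ((j+1)*L)"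
      unfolding block_dims(2) by (rule unitary_carrier[OF Qbar_j_unitary])
    show "mat_adjoint (Qbar Om j L) * Qbar Om j L = 1\<^sub>m ((j+1)*L)"
      unfolding block_dims(2) by (rule unitary_adjoint_mult[OF Qbar_j_unitary])
    show "R \<in> carrier_mat (j*L) (j*L)" "invertible_mat R" unfolding block_dims(1) by (fact R)+
    show "Qbar Om j L * lead ((j+1)*L) (j*L) Hb = stack_zero R L"
      unfolding block_dims(1,2) lead_full[OF Hb_carrier] by (rule R(3))
    show "Yfom * fom_weight + stack_zero Yprev L * (1\<^sub>m L - fom_weight) \<in> carrier_mat (j*L) L"
      using Yfom_carrier Yc Mc unfolding block_dims(1) by (auto simp: stack_zero_def)
    show "row_range 0 (j*L) (Qbar Om j L * (lead ((j+1)*L) (j*L) Hb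
        * (Yfom * fom_weight + stack_zero Yprev L * (1\<^sub>m L - fom_weight)) - Eblk (j+1) L * S0)) = 0\<^sub>m (j*L) L"
      using top unfolding Eblk_next_rhs block_dims(1,2) lead_full[OF Hb_carrier] .
  qed (rule S0)
qed

lemma gmres_X_next:
  assumes "invertible_mat Ct"
  shows "gmres_X X0 W Hb S0 j L
    = fom_X X0 W Hb S0 j L * fom_weight + gmres_X X0 W Hb S0 (j - 1) L * (1\<^sub>m L - fom_weight)"
proof -
  have Yc: "Yprev \<in> carrier_mat p L" using gmres_prev_residual by blast
  have Mc: "fom_weight \<in> carrier_mat L L" by (rule fom_weight_carrier[OF assms])
  have SZc: "stack_zero Yprev L \<in> carrier_mat (p+L) L" using Yc by (simp add: stack_zero_def)
  have "fom_X X0 W Hb S0 j L = X0 + lead n (p+L) W * Yfom"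
    unfolding fom_X_def Yfom_def rhs_def block_dims(1) using W by simp
  moreover have "gmres_X X0 W Hb S0 j L
      = X0 + lead n (p+L) W * (Yfom * fom_weight + stack_zero Yprev L * (1\<^sub>m L - fom_weight))"
    unfolding gmres_X_def gmres_next[OF assms] block_dims(1) using W by simp
  ultimately show ?thesis
    unfolding gmres_X_prev using affine_combination_mult[OF X0 lead_carrier Yfom_carrier SZc Mc] by simp
qed

end

theorem mainTheorem8:
  fixes n L j :: nat
    and A B X0 V1 S0 W Hb :: "complex mat"
    and Om :: "nat \<Rightarrow> complex mat"
    and U1 U2 V :: "complex mat"
    and c s :: "nat \<Rightarrow> real"
  assumes "n \<ge> 1" and "L \<ge> 1" and "j \<ge> 2"
    and A: "A \<in> carrier_mat n n" and B: "B \<in> carrier_mat n L" and X0: "X0 \<in> carrier_mat n L"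
    (* reduced QR of F_0 = B - A X_0 *)
    and V1: "V1 \<in> carrier_mat n L" and "orthonormal_cols V1"
    and S0: "S0 \<in> carrier_mat L L" and "upper_triangular S0"
    and "B - A * X0 = V1 * S0"
    (* block Arnoldi: W = W_{j+1}, Hb = \bar H_j *)
    and W: "W \<in> carrier_mat n ((j+1)*L)" and "orthonormal_cols W"
    and "lead n L W = V1"
    and Hb: "Hb \<in> carrier_mat ((j+1)*L) (j*L)"
    and "A * lead n (j*L) W = W * Hb"
    and "\<forall>i k. 1 \<le> k \<and> k \<le> j \<and> k + 1 < i \<and> i \<le> j + 1 \<longrightarrow> blk Hb i k L = 0\<^sub>m L L"
    and "\<forall>k. 1 \<le> k \<and> k \<le> j \<longrightarrow> upper_triangular (blk Hb (k+1) k L)"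
    (* \bar H_j has full column rank *)
    and "vec_space.rank ((j+1)*L) Hb = j*L"
    (* block QR factorization *)
    and "\<forall>i. 1 \<le> i \<and> i \<le> j \<longrightarrow> unitary (2*L) (Om i)"
    and "\<forall>k. 1 \<le> k \<and> k \<le> j \<longrightarrow> (\<exists>R. R \<in> carrier_mat (k*L) (k*L) \<and> upper_triangular R \<and>
            invertible_mat R \<and> Qbar Om k L * lead ((k+1)*L) (k*L) Hb = stack_zero R L)"
    (* additional hypotheses *)
    and "invertible_mat (lead (j*L) (j*L) Hb)"
    and "vec_space.rank n (B - A * gmres_X X0 W Hb S0 (j-1) L) = L"
    (* CS decomposition of the first block column of Omega_j *)
    and "unitary L U1" and "unitary L U2" and "unitary L V"
    and "\<forall>i<L. c i \<ge> 0 \<and> s i \<ge> 0 \<and> (c i)\<^sup>2 + (s i)\<^sup>2 = 1"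
    and "blk (Om j) 1 1 L = U1 * diag_real L c * mat_adjoint V"
    and "blk (Om j) 2 1 L = U2 * diag_real L s * mat_adjoint V"
  shows "let Ct = row_range ((j-1)*L) L (Qbar Om (j-1) L * Eblk j L * S0);
             M1 = minv Ct * V * (diag_real L c * diag_real L c) * mat_adjoint V * Ct;
             M2 = minv Ct * V * (diag_real L s * diag_real L s) * mat_adjoint V * Ct
         in invertible_mat Ct
            \<and> gmres_X X0 W Hb S0 j L = fom_X X0 W Hb S0 j L * M1 + gmres_X X0 W Hb S0 (j-1) L * M2
            \<and> M1 + M2 = 1\<^sub>m L
            \<and> M1 = minv Ct * mat_adjoint (blk (Om j) 1 1 L) * blk (Om j) 1 1 L * Ct"
proof -
  interpret block_gmres_step n L j A B X0 S0 W Hb Om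
  proof
    show "B - A * X0 = lead n L W * S0" using assms(11,14) by simp
  qed (use assms in blast)+
  have CtI: "invertible_mat Ct" using Ct_invertible assms(23) by blast
  have cs: "\<forall>i<L. (c i)\<^sup>2 + (s i)\<^sup>2 = 1" using assms(27) by blast
  have M1: "minv Ct * V * (diag_real L c * diag_real L c) * mat_adjoint V * Ct = fom_weight"
    unfolding fom_weight_def
    by (rule cs_similar_gram[OF assms(24) unitary_carrier[OF assms(26)] Ct_carrier CtI assms(28)])
  note weights = cs_weights_sum[OF assms(26) Ct_carrier CtI cs, unfolded M1]
  show ?thesis
    unfolding Let_def Ct_eq[symmetric] M1 weights(2)
    using CtI gmres_X_next[OF CtI] weights(1)[unfolded weights(2)] by (simp add: fom_weight_def)
qed

end
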